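(* Let $A$ be a sesquiad and $A^{\mathrm{red}}=A/\operatorname{Nil}(A)$. Then $A^{\mathrm{red}}$ is reduced, it is the largest reduced quotient of $A$ (by a congruence), and the projection $A\to A^{\mathrm{red}}$ induces a homeomorphism $\operatorname{spec}_cA^{\mathrm{red}}\to\operatorname{spec}_cA$.
   Context: Monoids are commutative with $1$ and a zero $0$. A sesquiad is a monoid $A$ with an addition: partially defined sums $\sum_jk_ja_j$ coming from an injective monoid morphism $\varphi:A\to R$ into a commutative ring with $\varphi(0)=0$, defined exactly when $\sum_jk_j\varphi(a_j)\in\varphi(A)$. A congruence is an equivalence relation $\mathcal C$ on $A$ such that $A/\mathcal C$ admits an addition making $A\to A/\mathcal C$ a sesquiad morphism; the quotient $A/\mathcal C$ carries the minimal such addition (the one defined by $A/\mathcal C\hookrightarrow R_A/J$, $J$ the ideal of the universal ring $R_A$ generated by $a-b$, $a\sim_{\mathcal C}b$). A congruence is prime if $A/\mathcal C$ is integral ($1\not\sim 0$; $af\sim bf\Rightarrow a\sim b$ or $f\sim0$). $\operatorname{spec}_cA$ is the set of prime congruences with topology generated by $D(a,b)=\{\mathcal C:(a,b)\notin\mathcal C\}$. A sesquiad morphism $\varphi:A\to B$ induces $\varphi^*:\operatorname{spec}_cB\to\operatorname{spec}_cA$, $E\mapsto\{(a,a'):\varphi(a)\sim_E\varphi(a')\}$. $\operatorname{Nil}(A)=\bigcap_{E\in\operatorname{spec}_cA}E$, and $A$ is reduced if $\operatorname{Nil}(A)$ is the diagonal $\Delta$. *)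

theory Defs
  imports "HOL-Analysis.Abstract_Topology" "HOL-Algebra.Ideal"
begin

text \<open>A sesquiad: a commutative monoid with 1 and an absorbing 0 on a carrier set,
  together with its partial addition, recorded as the relation
  S_sum k a  meaning  "the formal sum  sum_x k(x) x  is defined and equals a",
  where k is a finitely supported integer coefficient function on the carrier.\<close>

record 'a sesquiad =
  S_carrier :: "'a set"
  S_mult :: "'a \<Rightarrow> 'a \<Rightarrow> 'a"
  S_one :: "'a"
  S_zero :: "'a"
  S_sum :: "('a \<Rightarrow> int) \<Rightarrow> 'a \<Rightarrow> bool"

definition fin_comb :: "'a set \<Rightarrow> ('a \<Rightarrow> int) \<Rightarrow> bool" where
  "fin_comb A k \<longleftrightarrow> finite {x. k x \<noteq> 0} \<and> {x. k x \<noteq> 0} \<subseteq> A"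

definition comm_monoid_zero :: "'a sesquiad \<Rightarrow> bool" where
  "comm_monoid_zero S \<longleftrightarrow>
     S_one S \<in> S_carrier S \<and> S_zero S \<in> S_carrier S \<and>
     (\<forall>x\<in>S_carrier S. \<forall>y\<in>S_carrier S. S_mult S x y \<in> S_carrier S) \<and>
     (\<forall>x\<in>S_carrier S. \<forall>y\<in>S_carrier S. \<forall>z\<in>S_carrier S.
        S_mult S (S_mult S x y) z = S_mult S x (S_mult S y z)) \<and>
     (\<forall>x\<in>S_carrier S. \<forall>y\<in>S_carrier S. S_mult S x y = S_mult S y x) \<and>
     (\<forall>x\<in>S_carrier S. S_mult S (S_one S) x = x) \<and>
     (\<forall>x\<in>S_carrier S. S_mult S (S_zero S) x = S_zero S)"

text \<open>The ring is taken with carrier type ('a => int) set; this is no loss of generality,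
  since the subring generated by phi(A) is a quotient of the monoid ring Z[A], whose
  elements are finitely supported functions 'a => int.\<close>

definition is_sesquiad :: "'a sesquiad \<Rightarrow> bool" where
  "is_sesquiad S \<longleftrightarrow> comm_monoid_zero S \<and>
     (\<exists>(R :: ('a \<Rightarrow> int) set ring) \<phi>. cring R \<and>
        \<phi> \<in> S_carrier S \<rightarrow> carrier R \<and> inj_on \<phi> (S_carrier S) \<and>
        \<phi> (S_one S) = \<one>\<^bsub>R\<^esub> \<and> \<phi> (S_zero S) = \<zero>\<^bsub>R\<^esub> \<and>
        (\<forall>x\<in>S_carrier S. \<forall>y\<in>S_carrier S. \<phi> (S_mult S x y) = \<phi> x \<otimes>\<^bsub>R\<^esub> \<phi> y) \<and>
        (\<forall>k a. S_sum S k a \<longleftrightarrow>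
           fin_comb (S_carrier S) k \<and> a \<in> S_carrier S \<and>
           finsum R (\<lambda>x. add_pow R (k x) (\<phi> x)) {x. k x \<noteq> 0} = \<phi> a))"

definition push_comb :: "('a \<Rightarrow> 'b) \<Rightarrow> ('a \<Rightarrow> int) \<Rightarrow> ('b \<Rightarrow> int)" where
  "push_comb f k = (\<lambda>y. \<Sum>x\<in>{x. k x \<noteq> 0 \<and> f x = y}. k x)"

definition sesq_hom :: "'a sesquiad \<Rightarrow> 'b sesquiad \<Rightarrow> ('a \<Rightarrow> 'b) \<Rightarrow> bool" where
  "sesq_hom S T f \<longleftrightarrow>
     f \<in> S_carrier S \<rightarrow> S_carrier T \<and>
     f (S_one S) = S_one T \<and> f (S_zero S) = S_zero T \<and>
     (\<forall>x\<in>S_carrier S. \<forall>y\<in>S_carrier S. f (S_mult S x y) = S_mult T (f x) (f y)) \<and>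
     (\<forall>k a. S_sum S k a \<longrightarrow> S_sum T (push_comb f k) (f a))"

definition basis_el :: "'a \<Rightarrow> ('a \<Rightarrow> int)" where
  "basis_el a = (\<lambda>z. if z = a then 1 else 0)"

definition monoid_ring :: "'a sesquiad \<Rightarrow> ('a \<Rightarrow> int) ring" where
  "monoid_ring S =
     \<lparr> carrier = {f. fin_comb (S_carrier S) f},
       mult = (\<lambda>f g z. \<Sum>(x, y)\<in>{(x, y). f x \<noteq> 0 \<and> g y \<noteq> 0 \<and> S_mult S x y = z}. f x * g y),
       one = basis_el (S_one S),
       zero = (\<lambda>_. 0),
       add = (\<lambda>f g z. f z + g z) \<rparr>"

text \<open>The universal ring R_A is Z[A] modulo the ideal generated by e_0 and the elements
  sum_x k(x) e_x - e_a for all defined sums  sum_x k(x) x = a.  For an equivalence C,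
  R_A/J (J generated by a - b, a ~ b) is Z[A] modulo the ideal below.\<close>
definition cong_ideal :: "'a sesquiad \<Rightarrow> ('a \<times> 'a) set \<Rightarrow> ('a \<Rightarrow> int) set" where
  "cong_ideal S C = genideal (monoid_ring S)
     ({basis_el (S_zero S)} \<union>
      {(\<lambda>z. k z - basis_el a z) | k a. S_sum S k a} \<union>
      {(\<lambda>z. basis_el a z - basis_el b z) | a b. (a, b) \<in> C})"

definition cls :: "('a \<times> 'a) set \<Rightarrow> 'a \<Rightarrow> 'a set" where
  "cls C a = C `` {a}"

definition quot_sum :: "'a sesquiad \<Rightarrow> ('a \<times> 'a) set \<Rightarrow> ('a set \<Rightarrow> int) \<Rightarrow> 'a set \<Rightarrow> bool" where
  "quot_sum S C \<kappa> Y \<longleftrightarrow>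
     fin_comb (S_carrier S // C) \<kappa> \<and> Y \<in> S_carrier S // C \<and>
     (\<exists>k a. fin_comb (S_carrier S) k \<and> a \<in> Y \<and> push_comb (cls C) k = \<kappa> \<and>
        (\<lambda>z. k z - basis_el a z) \<in> cong_ideal S C)"

text \<open>Monoid structure of A/C (well defined when C is a monoid congruence), with a given addition.\<close>
definition quot_with :: "'a sesquiad \<Rightarrow> ('a \<times> 'a) set \<Rightarrow> (('a set \<Rightarrow> int) \<Rightarrow> 'a set \<Rightarrow> bool)
    \<Rightarrow> 'a set sesquiad" where
  "quot_with S C \<sigma> =
     \<lparr> S_carrier = S_carrier S // C,
       S_mult = (\<lambda>X Y. cls C (S_mult S (SOME x. x \<in> X) (SOME y. y \<in> Y))),
       S_one = cls C (S_one S),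
       S_zero = cls C (S_zero S),
       S_sum = \<sigma> \<rparr>"

definition quot :: "'a sesquiad \<Rightarrow> ('a \<times> 'a) set \<Rightarrow> 'a set sesquiad" where
  "quot S C = quot_with S C (quot_sum S C)"

definition is_congruence :: "'a sesquiad \<Rightarrow> ('a \<times> 'a) set \<Rightarrow> bool" where
  "is_congruence S C \<longleftrightarrow> equiv (S_carrier S) C \<and>
     (\<forall>a b c. (a, b) \<in> C \<longrightarrow> c \<in> S_carrier S \<longrightarrow> (S_mult S a c, S_mult S b c) \<in> C) \<and>
     (\<exists>\<sigma>. is_sesquiad (quot_with S C \<sigma>) \<and> sesq_hom S (quot_with S C \<sigma>) (cls C))"

definition is_prime_congruence :: "'a sesquiad \<Rightarrow> ('a \<times> 'a) set \<Rightarrow> bool" where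
  "is_prime_congruence S C \<longleftrightarrow> is_congruence S C \<and>
     (S_one S, S_zero S) \<notin> C \<and>
     (\<forall>a\<in>S_carrier S. \<forall>b\<in>S_carrier S. \<forall>f\<in>S_carrier S.
        (S_mult S a f, S_mult S b f) \<in> C \<longrightarrow> (a, b) \<in> C \<or> (f, S_zero S) \<in> C)"

definition spec_c :: "'a sesquiad \<Rightarrow> ('a \<times> 'a) set set" where
  "spec_c S = {C. is_prime_congruence S C}"

definition D_open :: "'a sesquiad \<Rightarrow> 'a \<Rightarrow> 'a \<Rightarrow> ('a \<times> 'a) set set" where
  "D_open S a b = {C \<in> spec_c S. (a, b) \<notin> C}"

definition spec_top :: "'a sesquiad \<Rightarrow> ('a \<times> 'a) set topology" where
  "spec_top S = topology_generated_by
     (insert (spec_c S) {D_open S a b | a b. a \<in> S_carrier S \<and> b \<in> S_carrier S})"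

definition spec_map :: "'a sesquiad \<Rightarrow> ('a \<Rightarrow> 'b) \<Rightarrow> ('b \<times> 'b) set \<Rightarrow> ('a \<times> 'a) set" where
  "spec_map S \<phi> E = {(a, a'). a \<in> S_carrier S \<and> a' \<in> S_carrier S \<and> (\<phi> a, \<phi> a') \<in> E}"

definition Nil_cong :: "'a sesquiad \<Rightarrow> ('a \<times> 'a) set" where
  "Nil_cong S = (S_carrier S \<times> S_carrier S) \<inter> \<Inter> (spec_c S)"

definition reduced :: "'a sesquiad \<Rightarrow> bool" where
  "reduced S \<longleftrightarrow> Nil_cong S = Id_on (S_carrier S)"

definition red :: "'a sesquiad \<Rightarrow> 'a set sesquiad" where
  "red S = quot S (Nil_cong S)"

end

(*
  Congruences on a sesquiad are exactly the common kernels of families of additive characters,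
  i.e. multiplicative maps into commutative rings that respect the defined sums. A congruence C
  gives one character, A -> A/C followed by the ring embedding of A/C. Conversely, if C is the
  common kernel of characters psi_i, they extend to ring maps Z[A/C] -> R_i; modulo their common
  kernel, Z[A/C] becomes a ring into which A/C embeds, and the addition induced by this embedding
  makes A -> A/C a morphism. Nil(A) is the common kernel of the characters of all prime congruences,
  hence a congruence.

  Primes of A/N correspond to the primes of A containing N: a prime of A/N pulls back along
  A -> A/N, and the character of a prime C containing N factors through A/N, since it kills the
  ideal defining the minimal addition of A/N. Basic opens correspond to basic opens, so for
  N = Nil(A), which lies in every prime, this is a homeomorphism, and A/Nil(A) is reduced because
  Nil(A) is the intersection of all primes. If A/C is reduced, each of its primes pulls back to
  a prime of A containing C, and intersecting gives Nil(A) contained in C.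
*)
theory Submission
  imports Defs "HOL-Algebra.QuotRing" "HOL-Algebra.Multiplicative_Group"
begin

section \<open>The monoid ring\<close>

definition supp :: "('a \<Rightarrow> int) \<Rightarrow> 'a set" where
  "supp f = {x. f x \<noteq> 0}"

lemma supp_basis_el [simp]: "supp (basis_el a) = {a}"
  by (simp add: supp_def basis_el_def)

lemma convolution_as_double_sum:
  assumes "finite A" "supp f \<subseteq> A" "finite B" "supp g \<subseteq> B"
  shows "(\<Sum>(x, y)\<in>{(x, y). f x \<noteq> 0 \<and> g y \<noteq> 0 \<and> m x y = z}. f x * g y)
       = (\<Sum>x\<in>A. \<Sum>y\<in>B. if m x y = z then f x * g y else 0)"
proof -
  let ?P = "{(x, y). f x \<noteq> 0 \<and> g y \<noteq> 0 \<and> m x y = z}"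
  have P: "A \<times> B \<inter> {p. f (fst p) \<noteq> 0 \<and> g (snd p) \<noteq> 0 \<and> m (fst p) (snd p) = z} = ?P"
    using assms by (auto simp: supp_def)
  have "(\<Sum>x\<in>A. \<Sum>y\<in>B. if m x y = z then f x * g y else 0)
      = (\<Sum>(x, y)\<in>A \<times> B. if (x, y) \<in> ?P then f x * g y else 0)"
    by (simp add: sum.cartesian_product) (rule sum.cong, auto)
  also have "\<dots> = (\<Sum>(x, y)\<in>?P. f x * g y)"
    using assms by (simp add: sum.If_cases case_prod_beta P)
  finally show ?thesis by simp
qed

lemma monoid_ring_carrier_iff:
  "f \<in> carrier (monoid_ring S) \<longleftrightarrow> finite (supp f) \<and> supp f \<subseteq> S_carrier S"
  by (simp add: monoid_ring_def fin_comb_def supp_def)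

lemma monoid_ring_simps:
  "one (monoid_ring S) = basis_el (S_one S)" "zero (monoid_ring S) = (\<lambda>_. 0)"
  "add (monoid_ring S) f g = (\<lambda>z. f z + g z)"
  by (simp_all add: monoid_ring_def)

lemma monoid_ring_mult_eq:
  assumes "finite A" "supp f \<subseteq> A" "finite B" "supp g \<subseteq> B"
  shows "mult (monoid_ring S) f g z
    = (\<Sum>x\<in>A. \<Sum>y\<in>B. if S_mult S x y = z then f x * g y else 0)"
  using convolution_as_double_sum[OF assms, of "S_mult S" z] by (simp add: monoid_ring_def)

lemma supp_monoid_ring_mult:
  assumes "finite A" "supp f \<subseteq> A" "finite B" "supp g \<subseteq> B"
  shows "supp (mult (monoid_ring S) f g) \<subseteq> (\<lambda>(x, y). S_mult S x y) ` (A \<times> B)"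
proof
  fix z assume "z \<in> supp (mult (monoid_ring S) f g)"
  hence "(\<Sum>x\<in>A. \<Sum>y\<in>B. if S_mult S x y = z then f x * g y else 0) \<noteq> 0"
    using monoid_ring_mult_eq[OF assms] by (simp add: supp_def)
  then obtain x where x: "x \<in> A" "(\<Sum>y\<in>B. if S_mult S x y = z then f x * g y else 0) \<noteq> 0"
    using sum.not_neutral_contains_not_neutral by blast
  then obtain y where "y \<in> B" "(if S_mult S x y = z then f x * g y else 0) \<noteq> 0"
    using sum.not_neutral_contains_not_neutral by blast
  with x show "z \<in> (\<lambda>(x, y). S_mult S x y) ` (A \<times> B)" by (force split: if_splits)
qed

lemma triple_sum_collapse:
  fixes b :: "'u \<Rightarrow> 'x \<Rightarrow> 'y \<Rightarrow> int"
  assumes "finite U" "finite F" "finite G" "\<And>x y. x \<in> F \<Longrightarrow> y \<in> G \<Longrightarrow> p x y \<in> U"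
  shows "(\<Sum>u\<in>U. \<Sum>x\<in>F. \<Sum>y\<in>G. if p x y = u then b u x y else 0)
    = (\<Sum>x\<in>F. \<Sum>y\<in>G. b (p x y) x y)"
proof -
  have "(\<Sum>u\<in>U. \<Sum>x\<in>F. \<Sum>y\<in>G. if p x y = u then b u x y else 0)
      = (\<Sum>x\<in>F. \<Sum>y\<in>G. \<Sum>u\<in>U. if p x y = u then b u x y else 0)"
    by (subst sum.swap) (rule sum.cong[OF refl], rule sum.swap)
  also have "\<dots> = (\<Sum>x\<in>F. \<Sum>y\<in>G. b (p x y) x y)"
    using assms by (intro sum.cong refl) (simp add: sum.delta)
  finally show ?thesis .
qed

lemma if_double_sum_mult:
  fixes a :: "'x \<Rightarrow> 'y \<Rightarrow> int"
  shows "(if P then (\<Sum>x\<in>F. \<Sum>y\<in>G. if Q x y then a x y else 0) * c else 0)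
    = (\<Sum>x\<in>F. \<Sum>y\<in>G. if Q x y then (if P then a x y * c else 0) else 0)"
  by (cases P) (simp_all add: sum_distrib_right if_distrib if_distribR cong: if_cong)

lemma if_mult_double_sum:
  fixes a :: "'x \<Rightarrow> 'y \<Rightarrow> int"
  shows "(if P then c * (\<Sum>x\<in>F. \<Sum>y\<in>G. if Q x y then a x y else 0) else 0)
    = (\<Sum>x\<in>F. \<Sum>y\<in>G. if Q x y then (if P then c * a x y else 0) else 0)"
  by (cases P) (simp_all add: sum_distrib_left if_distrib cong: if_cong)

context
  fixes S :: "'a sesquiad"
  assumes S: "comm_monoid_zero S"
begin

lemma monoid_ring_mult_closed:
  assumes "f \<in> carrier (monoid_ring S)" "g \<in> carrier (monoid_ring S)"
  shows "mult (monoid_ring S) f g \<in> carrier (monoid_ring S)"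
proof -
  have f: "finite (supp f)" "supp f \<subseteq> S_carrier S" and g: "finite (supp g)" "supp g \<subseteq> S_carrier S"
    using assms by (auto simp: monoid_ring_carrier_iff)
  have "supp (mult (monoid_ring S) f g) \<subseteq> (\<lambda>(x, y). S_mult S x y) ` (supp f \<times> supp g)"
    using f g by (intro supp_monoid_ring_mult) auto
  moreover have "(\<lambda>(x, y). S_mult S x y) ` (supp f \<times> supp g) \<subseteq> S_carrier S"
    using f g S by (auto simp: comm_monoid_zero_def)
  ultimately show ?thesis
    using f g by (auto simp: monoid_ring_carrier_iff intro: finite_subset)
qed

lemma monoid_ring_mult_assoc:
  assumes f: "f \<in> carrier (monoid_ring S)" and g: "g \<in> carrier (monoid_ring S)"
    and h: "h \<in> carrier (monoid_ring S)"
  shows "mult (monoid_ring S) (mult (monoid_ring S) f g) h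
    = mult (monoid_ring S) f (mult (monoid_ring S) g h)"
proof
  fix z
  let ?m = "S_mult S" and ?R = "monoid_ring S"
  let ?F = "supp f" and ?G = "supp g" and ?H = "supp h"
  let ?U = "(\<lambda>(x, y). ?m x y) ` (?F \<times> ?G)" and ?V = "(\<lambda>(x, y). ?m x y) ` (?G \<times> ?H)"
  have fin: "finite ?F" "finite ?G" "finite ?H"
    and sc: "?F \<subseteq> S_carrier S" "?G \<subseteq> S_carrier S" "?H \<subseteq> S_carrier S"
    using f g h by (auto simp: monoid_ring_carrier_iff)
  have finU: "finite ?U" "finite ?V" using fin by auto
  have sU: "supp (mult ?R f g) \<subseteq> ?U" "supp (mult ?R g h) \<subseteq> ?V"
    by (rule supp_monoid_ring_mult; use fin in auto)+
  have fg: "\<And>u. mult ?R f g u = (\<Sum>x\<in>?F. \<Sum>y\<in>?G. if ?m x y = u then f x * g y else 0)"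
    using fin by (intro monoid_ring_mult_eq) auto
  have gh: "\<And>v. mult ?R g h v = (\<Sum>y\<in>?G. \<Sum>w\<in>?H. if ?m y w = v then g y * h w else 0)"
    using fin by (intro monoid_ring_mult_eq) auto
  have "mult ?R (mult ?R f g) h z
      = (\<Sum>w\<in>?H. \<Sum>u\<in>?U. if ?m u w = z then mult ?R f g u * h w else 0)"
    using fin finU sU by (subst monoid_ring_mult_eq[of ?U _ ?H]) (auto intro: sum.swap)
  also have "\<dots> = (\<Sum>w\<in>?H. \<Sum>u\<in>?U. \<Sum>x\<in>?F. \<Sum>y\<in>?G.
      if ?m x y = u then (if ?m u w = z then f x * g y * h w else 0) else 0)"
    unfolding fg by (intro sum.cong refl if_double_sum_mult)
  also have "\<dots> = (\<Sum>w\<in>?H. \<Sum>x\<in>?F. \<Sum>y\<in>?G. if ?m (?m x y) w = z then f x * g y * h w else 0)"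
    using fin finU by (intro sum.cong refl triple_sum_collapse) auto
  also have "\<dots> = (\<Sum>x\<in>?F. \<Sum>y\<in>?G. \<Sum>w\<in>?H. if ?m (?m x y) w = z then f x * g y * h w else 0)"
    by (subst sum.swap) (intro sum.cong refl sum.swap)
  also have "\<dots> = (\<Sum>x\<in>?F. \<Sum>y\<in>?G. \<Sum>w\<in>?H. if ?m x (?m y w) = z then f x * (g y * h w) else 0)"
    using sc S by (intro sum.cong refl) (auto simp: comm_monoid_zero_def subset_iff mult.assoc)
  also have "\<dots> = (\<Sum>x\<in>?F. \<Sum>v\<in>?V. \<Sum>y\<in>?G. \<Sum>w\<in>?H.
      if ?m y w = v then (if ?m x v = z then f x * (g y * h w) else 0) else 0)"
    using fin finU by (intro sum.cong refl triple_sum_collapse[symmetric]) auto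
  also have "\<dots> = (\<Sum>x\<in>?F. \<Sum>v\<in>?V. if ?m x v = z then f x * mult ?R g h v else 0)"
    unfolding gh by (intro sum.cong refl if_mult_double_sum[symmetric])
  also have "\<dots> = mult ?R f (mult ?R g h) z"
    using fin finU sU by (intro monoid_ring_mult_eq[symmetric]) auto
  finally show "mult ?R (mult ?R f g) h z = mult ?R f (mult ?R g h) z" .
qed

lemma monoid_ring_mult_comm:
  assumes f: "f \<in> carrier (monoid_ring S)" and g: "g \<in> carrier (monoid_ring S)"
  shows "mult (monoid_ring S) f g = mult (monoid_ring S) g f"
proof
  fix z
  have fin: "finite (supp f)" "finite (supp g)"
    and sc: "supp f \<subseteq> S_carrier S" "supp g \<subseteq> S_carrier S"
    using f g by (auto simp: monoid_ring_carrier_iff)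
  have "mult (monoid_ring S) f g z
      = (\<Sum>y\<in>supp g. \<Sum>x\<in>supp f. if S_mult S x y = z then f x * g y else 0)"
    using fin by (subst monoid_ring_mult_eq[of "supp f" _ "supp g"]) (auto intro: sum.swap)
  also have "\<dots> = (\<Sum>y\<in>supp g. \<Sum>x\<in>supp f. if S_mult S y x = z then g y * f x else 0)"
    using sc S by (intro sum.cong refl) (auto simp: comm_monoid_zero_def subset_iff mult.commute)
  also have "\<dots> = mult (monoid_ring S) g f z"
    using fin by (intro monoid_ring_mult_eq[symmetric]) auto
  finally show "mult (monoid_ring S) f g z = mult (monoid_ring S) g f z" .
qed

lemma monoid_ring_one_mult:
  assumes f: "f \<in> carrier (monoid_ring S)"
  shows "mult (monoid_ring S) (basis_el (S_one S)) f = f"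
proof
  fix z
  have fin: "finite (supp f)" and sc: "supp f \<subseteq> S_carrier S"
    using f by (auto simp: monoid_ring_carrier_iff)
  have "mult (monoid_ring S) (basis_el (S_one S)) f z
      = (\<Sum>x\<in>{S_one S}. \<Sum>y\<in>supp f. if S_mult S x y = z then basis_el (S_one S) x * f y else 0)"
    using fin by (intro monoid_ring_mult_eq) auto
  also have "\<dots> = (\<Sum>y\<in>supp f. if y = z then f y else 0)"
    using sc S by (auto simp: comm_monoid_zero_def subset_iff basis_el_def intro!: sum.cong)
  also have "\<dots> = f z" using fin by (simp add: sum.delta' supp_def)
  finally show "mult (monoid_ring S) (basis_el (S_one S)) f z = f z" .
qed

lemma monoid_ring_add_mult_distrib:
  assumes f: "f \<in> carrier (monoid_ring S)" and g: "g \<in> carrier (monoid_ring S)"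
    and h: "h \<in> carrier (monoid_ring S)"
  shows "mult (monoid_ring S) (\<lambda>z. f z + g z) h
    = (\<lambda>z. mult (monoid_ring S) f h z + mult (monoid_ring S) g h z)"
proof
  fix z
  let ?A = "supp f \<union> supp g"
  have fin: "finite (supp f)" "finite (supp g)" "finite (supp h)"
    using f g h by (auto simp: monoid_ring_carrier_iff)
  have eq: "mult (monoid_ring S) k h z
      = (\<Sum>x\<in>?A. \<Sum>y\<in>supp h. if S_mult S x y = z then k x * h y else 0)"
    if "k \<in> {f, g, \<lambda>z. f z + g z}" for k
    using fin that by (intro monoid_ring_mult_eq) (auto simp: supp_def)
  show "mult (monoid_ring S) (\<lambda>z. f z + g z) h z
      = mult (monoid_ring S) f h z + mult (monoid_ring S) g h z"
    by (simp add: eq sum.distrib[symmetric] distrib_right cong: if_cong) (intro sum.cong refl, simp)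
qed

lemma cring_monoid_ring: "cring (monoid_ring S)"
proof (rule cringI)
  show "abelian_group (monoid_ring S)"
  proof (rule abelian_groupI)
    fix x y assume "x \<in> carrier (monoid_ring S)" "y \<in> carrier (monoid_ring S)"
    moreover have "supp (\<lambda>z. x z + y z) \<subseteq> supp x \<union> supp y" by (auto simp: supp_def)
    ultimately show "x \<oplus>\<^bsub>monoid_ring S\<^esub> y \<in> carrier (monoid_ring S)"
      by (auto simp: monoid_ring_carrier_iff monoid_ring_simps intro: finite_subset)
  next
    fix x assume "x \<in> carrier (monoid_ring S)"
    thus "\<exists>y\<in>carrier (monoid_ring S). y \<oplus>\<^bsub>monoid_ring S\<^esub> x = \<zero>\<^bsub>monoid_ring S\<^esub>"
      by (intro bexI[of _ "\<lambda>z. - x z"]) (auto simp: monoid_ring_simps monoid_ring_carrier_iff supp_def)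
  qed (auto simp: monoid_ring_carrier_iff monoid_ring_simps supp_def)
  show "comm_monoid (monoid_ring S)"
  proof (rule comm_monoidI)
    show "\<one>\<^bsub>monoid_ring S\<^esub> \<in> carrier (monoid_ring S)"
      using S by (simp add: monoid_ring_simps monoid_ring_carrier_iff comm_monoid_zero_def)
  qed (auto simp: monoid_ring_simps monoid_ring_mult_closed monoid_ring_mult_assoc
      monoid_ring_one_mult intro: monoid_ring_mult_comm)
qed (simp add: monoid_ring_simps monoid_ring_add_mult_distrib)

end

lemma basis_el_carrier: "a \<in> S_carrier S \<Longrightarrow> basis_el a \<in> carrier (monoid_ring S)"
  by (simp add: monoid_ring_carrier_iff)

lemma diff_basis_el_carrier:
  assumes "finite (supp k)" "supp k \<subseteq> S_carrier S" "a \<in> S_carrier S"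
  shows "(\<lambda>z. k z - basis_el a z) \<in> carrier (monoid_ring S)"
proof -
  have "supp (\<lambda>z. k z - basis_el a z) \<subseteq> supp k \<union> {a}" by (auto simp: supp_def basis_el_def)
  thus ?thesis using assms by (auto simp: monoid_ring_carrier_iff intro: finite_subset)
qed

lemma basis_el_mult:
  assumes "a \<in> S_carrier S" "b \<in> S_carrier S"
  shows "mult (monoid_ring S) (basis_el a) (basis_el b) = basis_el (S_mult S a b)"
proof
  fix z
  have "mult (monoid_ring S) (basis_el a) (basis_el b) z
     = (\<Sum>x\<in>{a}. \<Sum>y\<in>{b}. if S_mult S x y = z then basis_el a x * basis_el b y else 0)"
    by (rule monoid_ring_mult_eq) auto
  thus "mult (monoid_ring S) (basis_el a) (basis_el b) z = basis_el (S_mult S a b) z"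
    by (simp add: basis_el_def)
qed

lemma monoid_ring_add_pow:
  assumes S: "comm_monoid_zero S" and f: "f \<in> carrier (monoid_ring S)"
  shows "add_pow (monoid_ring S) (n::int) f = (\<lambda>z. n * f z)"
proof -
  interpret Z: cring "monoid_ring S" by (rule cring_monoid_ring[OF S])
  have nat: "add_pow (monoid_ring S) (m::nat) f = (\<lambda>z. int m * f z)" for m
    by (induction m) (simp_all add: monoid_ring_simps algebra_simps)
  have neg: "\<ominus>\<^bsub>monoid_ring S\<^esub> g = (\<lambda>z. - g z)" if g: "g \<in> carrier (monoid_ring S)" for g
  proof -
    have "(\<lambda>z. - g z) \<in> carrier (monoid_ring S)" using g by (simp add: monoid_ring_carrier_iff supp_def)
    moreover have "(\<lambda>z. - g z) \<oplus>\<^bsub>monoid_ring S\<^esub> g = \<zero>\<^bsub>monoid_ring S\<^esub>" by (simp add: monoid_ring_simps)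
    ultimately show ?thesis using Z.minus_equality[OF _ g] by simp
  qed
  show ?thesis
  proof (cases "n \<ge> 0")
    case True thus ?thesis using nat[of "nat n"] by (simp add: add_pow_int_ge)
  next
    case False
    have "add_pow (monoid_ring S) (nat (-n)) f \<in> carrier (monoid_ring S)" using f by simp
    thus ?thesis using nat[of "nat (-n)"] False by (simp add: add_pow_int_lt neg)
  qed
qed

lemma monoid_ring_finsum:
  assumes S: "comm_monoid_zero S" and "finite A" and "g \<in> A \<rightarrow> carrier (monoid_ring S)"
  shows "finsum (monoid_ring S) g A = (\<lambda>z. \<Sum>X\<in>A. g X z)"
proof -
  interpret Z: cring "monoid_ring S" by (rule cring_monoid_ring[OF S])
  show ?thesis
    using assms(2,3) by (induction A rule: finite_induct) (simp_all add: monoid_ring_simps)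
qed

lemma monoid_ring_basis_expansion:
  assumes S: "comm_monoid_zero S" and k: "k \<in> carrier (monoid_ring S)"
  shows "finsum (monoid_ring S) (\<lambda>x. add_pow (monoid_ring S) (k x) (basis_el x)) (supp k) = k"
proof -
  interpret Z: cring "monoid_ring S" by (rule cring_monoid_ring[OF S])
  have fin: "finite (supp k)" and sc: "supp k \<subseteq> S_carrier S"
    using k by (auto simp: monoid_ring_carrier_iff)
  have "finsum (monoid_ring S) (\<lambda>x. add_pow (monoid_ring S) (k x) (basis_el x)) (supp k)
      = (\<lambda>z. \<Sum>x\<in>supp k. add_pow (monoid_ring S) (k x) (basis_el x) z)"
    using sc basis_el_carrier[of _ S] by (intro monoid_ring_finsum[OF S fin]) auto
  also have "\<dots> = (\<lambda>z. \<Sum>x\<in>supp k. if x = z then k x else 0)"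
    using sc basis_el_carrier[of _ S]
    by (intro ext sum.cong refl) (auto simp: monoid_ring_add_pow[OF S] basis_el_def)
  also have "\<dots> = k" using fin by (auto simp: sum.delta supp_def)
  finally show ?thesis .
qed

section \<open>Linear combinations in a ring\<close>

definition lin_comb :: "('r, 'm) ring_scheme \<Rightarrow> ('a \<Rightarrow> 'r) \<Rightarrow> ('a \<Rightarrow> int) \<Rightarrow> 'r" where
  "lin_comb R v k = finsum R (\<lambda>x. add_pow R (k x) (v x)) {x. k x \<noteq> 0}"

lemma lin_comb_cong:
  assumes "\<And>x. x \<in> supp k \<Longrightarrow> v x = w x"
  shows "lin_comb R v k = lin_comb R w k"
  unfolding lin_comb_def
proof (intro arg_cong[where f = "\<lambda>f. finsum R f _"] ext)
  fix x show "add_pow R (k x) (v x) = add_pow R (k x) (w x)"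
    using assms by (cases "k x = 0") (simp_all add: add_pow_def supp_def)
qed

lemma push_comb_eq:
  assumes "finite (supp k)"
  shows "push_comb f k y = (\<Sum>x\<in>supp k. if f x = y then k x else 0)"
proof -
  have "{x. k x \<noteq> 0 \<and> f x = y} = {x\<in>supp k. f x = y}" by (auto simp: supp_def)
  thus ?thesis unfolding push_comb_def using sum.inter_filter[OF assms, of k "\<lambda>x. f x = y"] by simp
qed

lemma supp_push_comb:
  assumes "finite (supp k)"
  shows "supp (push_comb f k) \<subseteq> f ` supp k"
proof
  fix y assume "y \<in> supp (push_comb f k)"
  hence "(\<Sum>x\<in>supp k. if f x = y then k x else 0) \<noteq> 0" by (simp add: supp_def push_comb_eq[OF assms])
  then obtain x where "x \<in> supp k" "(if f x = y then k x else 0) \<noteq> 0"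
    using sum.not_neutral_contains_not_neutral by blast
  thus "y \<in> f ` supp k" by (auto split: if_splits)
qed

context abelian_group
begin

lemma add_pow_zero_int [simp]: "add_pow G (0::int) x = \<zero>"
  by (simp add: add_pow_def)

lemma lin_comb_superset:
  assumes "finite A" "supp k \<subseteq> A" "v \<in> A \<rightarrow> carrier G"
  shows "lin_comb G v k = (\<Oplus>x\<in>A. add_pow G (k x) (v x))"
  unfolding lin_comb_def
  by (rule add.finprod_mono_neutral_cong_left) (use assms in \<open>auto simp: supp_def\<close>)

lemma add_pow_sum:
  assumes "finite I" "x \<in> carrier G"
  shows "add_pow G (\<Sum>i\<in>I. n i :: int) x = (\<Oplus>i\<in>I. add_pow G (n i) x)"
  using assms by (induction I rule: finite_induct) (simp_all add: add.int_pow_mult)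

lemma add_pow_sum_if:
  assumes "finite I" "x \<in> carrier G"
  shows "add_pow G (\<Sum>i\<in>I. if P i then n i else 0 :: int) x
    = (\<Oplus>i\<in>I. if P i then add_pow G (n i) x else \<zero>)"
  using assms by (simp add: add_pow_sum) (intro finsum_cong', auto)

lemma finsum_swap:
  assumes "finite A" "finite B" "\<And>a b. a \<in> A \<Longrightarrow> b \<in> B \<Longrightarrow> f a b \<in> carrier G"
  shows "(\<Oplus>a\<in>A. \<Oplus>b\<in>B. f a b) = (\<Oplus>b\<in>B. \<Oplus>a\<in>A. f a b)"
  using assms(1,3)
proof (induction A rule: finite_induct)
  case (insert a F)
  have "(\<Oplus>a\<in>insert a F. \<Oplus>b\<in>B. f a b) = (\<Oplus>b\<in>B. f a b) \<oplus> (\<Oplus>b\<in>B. \<Oplus>a\<in>F. f a b)"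
    using insert by (subst finsum_insert) (auto intro!: finsum_closed)
  also have "\<dots> = (\<Oplus>b\<in>B. f a b \<oplus> (\<Oplus>a\<in>F. f a b))"
    using insert by (intro finsum_addf[symmetric]) (auto intro!: finsum_closed)
  also have "\<dots> = (\<Oplus>b\<in>B. \<Oplus>a\<in>insert a F. f a b)"
    using insert by (intro finsum_cong' refl) (auto intro!: finsum_closed)
  finally show ?case .
qed (simp add: finsum_zero)

lemma finsum_delta:
  assumes "finite U" "t \<in> U" "c \<in> U \<rightarrow> carrier G"
  shows "(\<Oplus>u\<in>U. if t = u then c u else \<zero>) = c t"
  using add.finprod_singleton[OF assms(2,1), of c] assms by simp

lemma lin_comb_closed:
  assumes "finite (supp k)" "v \<in> supp k \<rightarrow> carrier G"
  shows "lin_comb G v k \<in> carrier G"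
  unfolding lin_comb_def using assms by (intro finsum_closed) (auto simp: supp_def)

lemma lin_comb_basis_el:
  assumes "v a \<in> carrier G"
  shows "lin_comb G v (basis_el a) = v a"
  using assms by (subst lin_comb_superset[of "{a}"]) (auto, simp add: basis_el_def add.int_pow_1)

lemma lin_comb_zero: "lin_comb G v (\<lambda>_. 0) = \<zero>"
  by (simp add: lin_comb_def)

lemma lin_comb_add:
  assumes "finite (supp k)" "finite (supp l)" "v \<in> D \<rightarrow> carrier G" "supp k \<subseteq> D" "supp l \<subseteq> D"
  shows "lin_comb G v (\<lambda>z. k z + l z) = lin_comb G v k \<oplus> lin_comb G v l"
proof -
  let ?A = "supp k \<union> supp l"
  have v: "v \<in> ?A \<rightarrow> carrier G" using assms by auto
  have "lin_comb G v (\<lambda>z. k z + l z) = (\<Oplus>x\<in>?A. add_pow G (k x + l x) (v x))"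
    using assms v by (intro lin_comb_superset) (auto simp: supp_def)
  also have "\<dots> = (\<Oplus>x\<in>?A. add_pow G (k x) (v x) \<oplus> add_pow G (l x) (v x))"
    using v by (intro finsum_cong') (auto simp: add.int_pow_mult Pi_iff)
  also have "\<dots> = (\<Oplus>x\<in>?A. add_pow G (k x) (v x)) \<oplus> (\<Oplus>x\<in>?A. add_pow G (l x) (v x))"
    using v by (intro finsum_addf) auto
  also have "\<dots> = lin_comb G v k \<oplus> lin_comb G v l"
    using assms v by (subst (1 2) lin_comb_superset[of ?A]) auto
  finally show ?thesis .
qed

lemma lin_comb_uminus:
  assumes "finite (supp l)" "v \<in> D \<rightarrow> carrier G" "supp l \<subseteq> D"
  shows "lin_comb G v (\<lambda>z. - l z) = \<ominus> lin_comb G v l"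
proof -
  have s: "supp (\<lambda>z. - l z) = supp l" by (simp add: supp_def)
  have "lin_comb G v (\<lambda>z. - l z) \<oplus> lin_comb G v l = lin_comb G v (\<lambda>z. - l z + l z)"
    using assms s by (intro lin_comb_add[symmetric]) auto
  also have "\<dots> = \<zero>" by (simp add: lin_comb_zero)
  finally show ?thesis
    using assms s by (intro minus_equality[symmetric]) (auto intro!: lin_comb_closed)
qed

lemma lin_comb_diff:
  assumes "finite (supp k)" "finite (supp l)" "v \<in> D \<rightarrow> carrier G" "supp k \<subseteq> D" "supp l \<subseteq> D"
  shows "lin_comb G v (\<lambda>z. k z - l z) = lin_comb G v k \<ominus> lin_comb G v l"
proof -
  have "lin_comb G v (\<lambda>z. k z + - l z) = lin_comb G v k \<oplus> lin_comb G v (\<lambda>z. - l z)"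
    using assms by (intro lin_comb_add) (auto simp: supp_def)
  thus ?thesis using assms by (simp add: lin_comb_uminus minus_eq)
qed

lemma lin_comb_push_comb:
  assumes "finite (supp k)" "supp k \<subseteq> D" "f \<in> D \<rightarrow> E" "v \<in> E \<rightarrow> carrier G"
  shows "lin_comb G v (push_comb f k) = lin_comb G (v \<circ> f) k"
proof -
  let ?Y = "f ` supp k"
  have vY: "v \<in> ?Y \<rightarrow> carrier G" using assms by auto
  have "lin_comb G v (push_comb f k) = (\<Oplus>y\<in>?Y. add_pow G (push_comb f k y) (v y))"
    using assms vY supp_push_comb[OF assms(1), of f] by (intro lin_comb_superset) auto
  also have "\<dots> = (\<Oplus>y\<in>?Y. \<Oplus>x\<in>supp k. if f x = y then add_pow G (k x) (v y) else \<zero>)"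
    using vY assms by (intro finsum_cong')
      (auto simp: push_comb_eq[OF assms(1)] add_pow_sum_if Pi_iff intro!: finsum_closed)
  also have "\<dots> = (\<Oplus>x\<in>supp k. \<Oplus>y\<in>?Y. if f x = y then add_pow G (k x) (v y) else \<zero>)"
    using vY assms by (intro finsum_swap) auto
  also have "\<dots> = (\<Oplus>x\<in>supp k. add_pow G (k x) (v (f x)))"
    using vY assms
    by (intro finsum_cong' refl finsum_delta[where c = "\<lambda>y. add_pow G (k _) (v y)", simplified])
      (auto simp: Pi_iff)
  also have "\<dots> = lin_comb G (v \<circ> f) k" unfolding lin_comb_def supp_def by simp
  finally show ?thesis .
qed

end

context cring
begin

lemma add_pow_mult_mult:
  assumes "p \<in> carrier R" "q \<in> carrier R"
  shows "add_pow R (a * b :: int) (p \<otimes> q) = add_pow R a p \<otimes> add_pow R b q"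
  using assms by (simp add: add_pow_ldistr_int add_pow_rdistr_int add.int_pow_pow mult.commute)

lemma lin_comb_mult:
  assumes S: "comm_monoid_zero S" and \<psi>: "\<psi> \<in> S_carrier S \<rightarrow> carrier R"
    and mult: "\<And>x y. x \<in> S_carrier S \<Longrightarrow> y \<in> S_carrier S \<Longrightarrow> \<psi> (S_mult S x y) = \<psi> x \<otimes> \<psi> y"
    and k: "k \<in> carrier (monoid_ring S)" and l: "l \<in> carrier (monoid_ring S)"
  shows "lin_comb R \<psi> (mult (monoid_ring S) k l) = lin_comb R \<psi> k \<otimes> lin_comb R \<psi> l"
proof -
  let ?m = "S_mult S" and ?F = "supp k" and ?H = "supp l"
  let ?U = "(\<lambda>(x, y). ?m x y) ` (?F \<times> ?H)"
  have fin: "finite ?F" "finite ?H" and sc: "?F \<subseteq> S_carrier S" "?H \<subseteq> S_carrier S"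
    using k l by (auto simp: monoid_ring_carrier_iff)
  have finU: "finite ?U" using fin by auto
  have mc: "\<And>x y. x \<in> ?F \<Longrightarrow> y \<in> ?H \<Longrightarrow> ?m x y \<in> ?U" by auto
  have "?U \<subseteq> S_carrier S" using sc S by (auto simp: comm_monoid_zero_def)
  hence pU: "\<psi> \<in> ?U \<rightarrow> carrier R" using \<psi> by blast
  have pF: "\<And>x. x \<in> ?F \<Longrightarrow> \<psi> x \<in> carrier R" "\<And>x. x \<in> ?H \<Longrightarrow> \<psi> x \<in> carrier R"
    using \<psi> sc by auto
  have kl: "\<And>z. mult (monoid_ring S) k l z = (\<Sum>x\<in>?F. \<Sum>y\<in>?H. if ?m x y = z then k x * l y else 0)"
    using fin by (intro monoid_ring_mult_eq) auto
  have "lin_comb R \<psi> (mult (monoid_ring S) k l)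
      = (\<Oplus>z\<in>?U. add_pow R (mult (monoid_ring S) k l z) (\<psi> z))"
    using finU pU supp_monoid_ring_mult[of ?F k ?H l S] fin by (intro lin_comb_superset) auto
  also have "\<dots> = (\<Oplus>z\<in>?U. \<Oplus>x\<in>?F. \<Oplus>y\<in>?H. if ?m x y = z then add_pow R (k x * l y) (\<psi> z) else \<zero>)"
    unfolding kl using pU fin
    by (intro finsum_cong') (auto simp: add_pow_sum add_pow_sum_if Pi_iff intro!: finsum_closed finsum_cong')
  also have "\<dots> = (\<Oplus>x\<in>?F. \<Oplus>z\<in>?U. \<Oplus>y\<in>?H. if ?m x y = z then add_pow R (k x * l y) (\<psi> z) else \<zero>)"
    using pU fin finU by (intro finsum_swap) (auto simp: Pi_iff intro!: finsum_closed)
  also have "\<dots> = (\<Oplus>x\<in>?F. \<Oplus>y\<in>?H. \<Oplus>z\<in>?U. if ?m x y = z then add_pow R (k x * l y) (\<psi> z) else \<zero>)"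
    using pU fin finU by (intro finsum_cong' refl finsum_swap) (auto simp: Pi_iff intro!: finsum_closed)
  also have "\<dots> = (\<Oplus>x\<in>?F. \<Oplus>y\<in>?H. add_pow R (k x * l y) (\<psi> (?m x y)))"
    using pU fin finU mc
    by (intro finsum_cong' refl finsum_delta[where c = "\<lambda>z. add_pow R (k _ * l _) (\<psi> z)", simplified])
      (auto simp: Pi_iff intro!: finsum_closed)
  also have "\<dots> = (\<Oplus>x\<in>?F. \<Oplus>y\<in>?H. add_pow R (k x) (\<psi> x) \<otimes> add_pow R (l y) (\<psi> y))"
    using pF sc by (intro finsum_cong' refl) (auto simp: subset_iff mult add_pow_mult_mult intro!: finsum_closed)
  also have "\<dots> = (\<Oplus>x\<in>?F. add_pow R (k x) (\<psi> x) \<otimes> (\<Oplus>y\<in>?H. add_pow R (l y) (\<psi> y)))"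
    using pF fin by (intro finsum_cong' refl finsum_rdistr[symmetric]) (auto intro!: finsum_closed)
  also have "\<dots> = (\<Oplus>x\<in>?F. add_pow R (k x) (\<psi> x)) \<otimes> (\<Oplus>y\<in>?H. add_pow R (l y) (\<psi> y))"
    using pF fin by (intro finsum_ldistr[symmetric]) (auto intro!: finsum_closed)
  also have "\<dots> = lin_comb R \<psi> k \<otimes> lin_comb R \<psi> l" unfolding lin_comb_def supp_def ..
  finally show ?thesis .
qed

lemma lin_comb_ring_hom:
  assumes S: "comm_monoid_zero S" and \<psi>: "\<psi> \<in> S_carrier S \<rightarrow> carrier R"
    and mult: "\<And>x y. x \<in> S_carrier S \<Longrightarrow> y \<in> S_carrier S \<Longrightarrow> \<psi> (S_mult S x y) = \<psi> x \<otimes> \<psi> y"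
    and one: "\<psi> (S_one S) = \<one>"
  shows "lin_comb R \<psi> \<in> ring_hom (monoid_ring S) R"
proof (rule ring_hom_memI)
  fix x y assume x: "x \<in> carrier (monoid_ring S)" and y: "y \<in> carrier (monoid_ring S)"
  show "lin_comb R \<psi> (x \<otimes>\<^bsub>monoid_ring S\<^esub> y) = lin_comb R \<psi> x \<otimes> lin_comb R \<psi> y"
    using lin_comb_mult[OF S \<psi> mult x y] by simp
  show "lin_comb R \<psi> (x \<oplus>\<^bsub>monoid_ring S\<^esub> y) = lin_comb R \<psi> x \<oplus> lin_comb R \<psi> y"
    using x y \<psi> by (simp add: monoid_ring_simps) (rule lin_comb_add, auto simp: monoid_ring_carrier_iff)
next
  show "lin_comb R \<psi> \<one>\<^bsub>monoid_ring S\<^esub> = \<one>"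
    using \<psi> S one by (simp add: monoid_ring_simps lin_comb_basis_el comm_monoid_zero_def Pi_iff)
qed (use \<psi> in \<open>auto simp: monoid_ring_carrier_iff intro!: lin_comb_closed\<close>)

end

lemma (in ring_hom_ring) hom_add_pow_int:
  assumes "x \<in> carrier R"
  shows "h (add_pow R (n::int) x) = add_pow S n (h x)"
  using group_hom.hom_int_pow[OF a_group_hom] assms by (simp add: add_pow_def)

lemma ring_hom_eq_lin_comb_basis_el:
  assumes S: "comm_monoid_zero S" and R: "cring R" and H: "H \<in> ring_hom (monoid_ring S) R"
    and k: "k \<in> carrier (monoid_ring S)"
  shows "H k = lin_comb R (H \<circ> basis_el) k"
proof -
  interpret Z: cring "monoid_ring S" by (rule cring_monoid_ring[OF S])
  interpret H: ring_hom_cring "monoid_ring S" R H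
    by (intro ring_hom_cring.intro ring_hom_cring_axioms.intro Z.is_cring R H)
  have sc: "supp k \<subseteq> S_carrier S" using k by (auto simp: monoid_ring_carrier_iff)
  have "H k = H (finsum (monoid_ring S) (\<lambda>x. add_pow (monoid_ring S) (k x) (basis_el x)) (supp k))"
    using monoid_ring_basis_expansion[OF S k] by simp
  also have "\<dots> = finsum R (\<lambda>x. add_pow R (k x) (H (basis_el x))) (supp k)"
    using sc basis_el_carrier[of _ S]
    by (subst H.hom_finsum) (auto simp: H.ring.hom_add_pow_int intro!: H.S.finsum_cong')
  also have "\<dots> = lin_comb R (H \<circ> basis_el) k" by (simp add: lin_comb_def supp_def)
  finally show ?thesis .
qed

section \<open>Quotient monoids\<close>

definition monoid_congruence :: "'a sesquiad \<Rightarrow> ('a \<times> 'a) set \<Rightarrow> bool" where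
  "monoid_congruence S C \<longleftrightarrow> equiv (S_carrier S) C \<and>
     (\<forall>a b c. (a, b) \<in> C \<longrightarrow> c \<in> S_carrier S \<longrightarrow> (S_mult S a c, S_mult S b c) \<in> C)"

lemma congruence_imp_monoid_congruence: "is_congruence S C \<Longrightarrow> monoid_congruence S C"
  by (simp add: is_congruence_def monoid_congruence_def)

lemma monoid_congruence_equiv: "monoid_congruence S C \<Longrightarrow> equiv (S_carrier S) C"
  by (simp add: monoid_congruence_def)

lemma cls_in_quotient: "a \<in> A \<Longrightarrow> cls C a \<in> A // C"
  by (simp add: cls_def quotientI)

lemma quotient_obtain_cls: "X \<in> A // C \<Longrightarrow> \<exists>a\<in>A. X = cls C a"
  by (auto simp: cls_def quotient_def)

lemma cls_eq_iff: "equiv A C \<Longrightarrow> a \<in> A \<Longrightarrow> b \<in> A \<Longrightarrow> cls C a = cls C b \<longleftrightarrow> (a, b) \<in> C"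
  unfolding cls_def by (simp add: eq_equiv_class_iff)

lemma some_in_cls: "equiv A C \<Longrightarrow> a \<in> A \<Longrightarrow> (a, SOME x. x \<in> cls C a) \<in> C"
  unfolding cls_def by (rule someI2[of _ a]) (auto simp: equiv_def refl_on_def)

lemma some_in_quotient:
  assumes "equiv A C" "X \<in> A // C"
  shows "(SOME x. x \<in> X) \<in> A" "cls C (SOME x. x \<in> X) = X"
proof -
  obtain a where a: "a \<in> A" "X = cls C a" using assms(2) by (metis quotient_obtain_cls)
  have aX: "(a, SOME x. x \<in> X) \<in> C" using some_in_cls[OF assms(1) a(1)] a(2) by simp
  thus A: "(SOME x. x \<in> X) \<in> A" using assms(1) by (auto simp: equiv_def refl_on_def)
  have "((SOME x. x \<in> X), a) \<in> C" using aX assms(1) unfolding equiv_def sym_def by blast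
  thus "cls C (SOME x. x \<in> X) = X" using a A assms(1) by (simp add: cls_eq_iff)
qed

lemma monoid_congruence_mult:
  assumes S: "comm_monoid_zero S" and C: "monoid_congruence S C" and "(a, x) \<in> C" "(b, y) \<in> C"
  shows "(S_mult S a b, S_mult S x y) \<in> C"
proof -
  have eq: "equiv (S_carrier S) C" using C by (rule monoid_congruence_equiv)
  have in_S: "a \<in> S_carrier S" "b \<in> S_carrier S" "x \<in> S_carrier S" "y \<in> S_carrier S"
    using assms(3,4) eq by (auto simp: equiv_def refl_on_def)
  have "(S_mult S a y, S_mult S x y) \<in> C" using C assms(3) in_S by (auto simp: monoid_congruence_def)
  moreover have "(S_mult S b a, S_mult S y a) \<in> C" using C assms(4) in_S by (auto simp: monoid_congruence_def)
  hence "(S_mult S a b, S_mult S a y) \<in> C" using S in_S by (simp add: comm_monoid_zero_def)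
  ultimately show ?thesis using eq by (meson equiv_def trans_def)
qed

lemma quot_with_simps:
  "S_carrier (quot_with S C \<sigma>) = S_carrier S // C" "S_one (quot_with S C \<sigma>) = cls C (S_one S)"
  "S_zero (quot_with S C \<sigma>) = cls C (S_zero S)" "S_sum (quot_with S C \<sigma>) = \<sigma>"
  by (simp_all add: quot_with_def)

lemma quot_simps:
  "S_carrier (quot S C) = S_carrier S // C" "S_one (quot S C) = cls C (S_one S)"
  "S_zero (quot S C) = cls C (S_zero S)" "S_sum (quot S C) = quot_sum S C"
  by (simp_all add: quot_def quot_with_def)

lemma quot_with_mult_cls:
  assumes S: "comm_monoid_zero S" and C: "monoid_congruence S C"
    and a: "a \<in> S_carrier S" and b: "b \<in> S_carrier S"
  shows "S_mult (quot_with S C \<sigma>) (cls C a) (cls C b) = cls C (S_mult S a b)"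
proof -
  have eq: "equiv (S_carrier S) C" using C by (rule monoid_congruence_equiv)
  have "(S_mult S a b, S_mult S (SOME x. x \<in> cls C a) (SOME y. y \<in> cls C b)) \<in> C"
    by (rule monoid_congruence_mult[OF S C some_in_cls[OF eq a] some_in_cls[OF eq b]])
  hence "cls C (S_mult S (SOME x. x \<in> cls C a) (SOME y. y \<in> cls C b)) = cls C (S_mult S a b)"
    unfolding cls_def using eq by (metis equiv_class_eq)
  thus ?thesis by (simp add: quot_with_def)
qed

lemma comm_monoid_zero_quot_with:
  assumes S: "comm_monoid_zero S" and C: "monoid_congruence S C"
  shows "comm_monoid_zero (quot_with S C \<sigma>)"
proof -
  let ?Q = "quot_with S C \<sigma>"
  have Sc: "S_one S \<in> S_carrier S" "S_zero S \<in> S_carrier S"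
    "\<And>x y. x \<in> S_carrier S \<Longrightarrow> y \<in> S_carrier S \<Longrightarrow> S_mult S x y \<in> S_carrier S"
    using S by (auto simp: comm_monoid_zero_def)
  have m: "\<And>a b. a \<in> S_carrier S \<Longrightarrow> b \<in> S_carrier S \<Longrightarrow> S_mult ?Q (cls C a) (cls C b) = cls C (S_mult S a b)"
    by (rule quot_with_mult_cls[OF S C])
  show ?thesis unfolding comm_monoid_zero_def quot_with_simps
  proof (intro conjI ballI)
    fix X Y Z assume "X \<in> S_carrier S // C" "Y \<in> S_carrier S // C" "Z \<in> S_carrier S // C"
    then obtain a b c where abc: "a \<in> S_carrier S" "b \<in> S_carrier S" "c \<in> S_carrier S"
      "X = cls C a" "Y = cls C b" "Z = cls C c"
      by (metis quotient_obtain_cls)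
    have "S_mult S (S_mult S a b) c = S_mult S a (S_mult S b c)"
      using S abc unfolding comm_monoid_zero_def by blast
    thus "S_mult ?Q (S_mult ?Q X Y) Z = S_mult ?Q X (S_mult ?Q Y Z)"
      using abc m Sc by simp
  next
    fix X Y assume "X \<in> S_carrier S // C" "Y \<in> S_carrier S // C"
    then obtain a b where ab: "a \<in> S_carrier S" "b \<in> S_carrier S" "X = cls C a" "Y = cls C b"
      by (metis quotient_obtain_cls)
    show "S_mult ?Q X Y \<in> S_carrier S // C" using ab m Sc by (auto intro: cls_in_quotient)
    show "S_mult ?Q X Y = S_mult ?Q Y X" using ab m S by (simp add: comm_monoid_zero_def)
  next
    fix X assume "X \<in> S_carrier S // C"
    then obtain a where a: "a \<in> S_carrier S" "X = cls C a" by (metis quotient_obtain_cls)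
    have "S_mult S (S_one S) a = a" "S_mult S (S_zero S) a = S_zero S"
      using S a unfolding comm_monoid_zero_def by blast+
    thus "S_mult ?Q (cls C (S_one S)) X = X" "S_mult ?Q (cls C (S_zero S)) X = cls C (S_zero S)"
      using a m Sc by simp_all
  qed (use Sc in \<open>auto intro: cls_in_quotient\<close>)
qed

section \<open>Characters\<close>

definition mult_char :: "'a sesquiad \<Rightarrow> ('r, 'm) ring_scheme \<Rightarrow> ('a \<Rightarrow> 'r) \<Rightarrow> bool" where
  "mult_char S R \<psi> \<longleftrightarrow> cring R \<and> \<psi> \<in> S_carrier S \<rightarrow> carrier R \<and>
     \<psi> (S_one S) = \<one>\<^bsub>R\<^esub> \<and> \<psi> (S_zero S) = \<zero>\<^bsub>R\<^esub> \<and>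
     (\<forall>x\<in>S_carrier S. \<forall>y\<in>S_carrier S. \<psi> (S_mult S x y) = \<psi> x \<otimes>\<^bsub>R\<^esub> \<psi> y)"

definition additive_char :: "'a sesquiad \<Rightarrow> ('r, 'm) ring_scheme \<Rightarrow> ('a \<Rightarrow> 'r) \<Rightarrow> bool" where
  "additive_char S R \<psi> \<longleftrightarrow> mult_char S R \<psi> \<and> (\<forall>k a. S_sum S k a \<longrightarrow> lin_comb R \<psi> k = \<psi> a)"

definition char_kernel :: "'a sesquiad \<Rightarrow> 'i set \<Rightarrow> ('i \<Rightarrow> 'a \<Rightarrow> 'r) \<Rightarrow> ('a \<times> 'a) set" where
  "char_kernel S I \<psi> = {(a, b). a \<in> S_carrier S \<and> b \<in> S_carrier S \<and> (\<forall>i\<in>I. \<psi> i a = \<psi> i b)}"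

lemma mult_charD:
  assumes "mult_char S R \<psi>"
  shows "cring R" "\<psi> \<in> S_carrier S \<rightarrow> carrier R"
    "\<psi> (S_one S) = \<one>\<^bsub>R\<^esub>" "\<psi> (S_zero S) = \<zero>\<^bsub>R\<^esub>"
    "\<And>x y. x \<in> S_carrier S \<Longrightarrow> y \<in> S_carrier S \<Longrightarrow> \<psi> (S_mult S x y) = \<psi> x \<otimes>\<^bsub>R\<^esub> \<psi> y"
  using assms by (simp_all add: mult_char_def)

lemma additive_charD:
  assumes "additive_char S R \<psi>"
  shows "mult_char S R \<psi>" "\<And>k a. S_sum S k a \<Longrightarrow> lin_comb R \<psi> k = \<psi> a"
  using assms by (simp_all add: additive_char_def)

lemma monoid_congruence_char_kernel:
  assumes "\<And>i. i \<in> I \<Longrightarrow> mult_char S (R i) (\<psi> i)" "comm_monoid_zero S"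
  shows "monoid_congruence S (char_kernel S I \<psi>)"
  using assms unfolding monoid_congruence_def char_kernel_def
  by (auto simp: equiv_def refl_on_def sym_def trans_def mult_char_def comm_monoid_zero_def)

lemma mult_char_quot:
  assumes S: "comm_monoid_zero S" and C: "monoid_congruence S C" and \<psi>: "mult_char S R \<psi>"
    and resp: "\<And>a b. (a, b) \<in> C \<Longrightarrow> \<psi> a = \<psi> b"
  shows "mult_char (quot S C) R (\<lambda>X. \<psi> (SOME x. x \<in> X))"
    and "\<And>a. a \<in> S_carrier S \<Longrightarrow> \<psi> (SOME x. x \<in> cls C a) = \<psi> a"
proof -
  have eq: "equiv (S_carrier S) C" using C by (rule monoid_congruence_equiv)
  show cl: "\<And>a. a \<in> S_carrier S \<Longrightarrow> \<psi> (SOME x. x \<in> cls C a) = \<psi> a"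
    using some_in_cls[OF eq] resp by metis
  have Sc: "S_one S \<in> S_carrier S" "S_zero S \<in> S_carrier S"
    "\<And>x y. x \<in> S_carrier S \<Longrightarrow> y \<in> S_carrier S \<Longrightarrow> S_mult S x y \<in> S_carrier S"
    using S by (auto simp: comm_monoid_zero_def)
  show "mult_char (quot S C) R (\<lambda>X. \<psi> (SOME x. x \<in> X))"
    unfolding mult_char_def quot_simps
  proof (intro conjI ballI)
    fix X Y assume "X \<in> S_carrier S // C" "Y \<in> S_carrier S // C"
    then obtain a b where ab: "a \<in> S_carrier S" "X = cls C a" "b \<in> S_carrier S" "Y = cls C b"
      by (metis quotient_obtain_cls)
    show "\<psi> (SOME x. x \<in> S_mult (quot S C) X Y) = \<psi> (SOME x. x \<in> X) \<otimes>\<^bsub>R\<^esub> \<psi> (SOME x. x \<in> Y)"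
      using ab cl Sc \<psi> quot_with_mult_cls[OF S C ab(1,3)] by (auto simp: quot_def mult_char_def)
  qed (use cl Sc \<psi> in \<open>auto simp: mult_char_def dest!: quotient_obtain_cls\<close>)
qed

section \<open>Congruences as kernels of characters\<close>

context ring
begin

lemma common_kernel_ideal:
  assumes "\<And>i. i \<in> I \<Longrightarrow> ring_hom_cring R (S i) (h i)"
  shows "ideal {x \<in> carrier R. \<forall>i\<in>I. h i x = \<zero>\<^bsub>S i\<^esub>} R"
proof (cases "I = {}")
  case True thus ?thesis using oneideal by simp
next
  case False
  have "{x \<in> carrier R. \<forall>i\<in>I. h i x = \<zero>\<^bsub>S i\<^esub>} = \<Inter> ((\<lambda>i. a_kernel R (S i) (h i)) ` I)"
    using False by (auto simp: a_kernel_def')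
  moreover have "ideal (\<Inter> ((\<lambda>i. a_kernel R (S i) (h i)) ` I)) R"
  proof (rule i_Intersect)
    fix J assume "J \<in> (\<lambda>i. a_kernel R (S i) (h i)) ` I"
    then obtain i where i: "i \<in> I" "J = a_kernel R (S i) (h i)" by blast
    interpret hi: ring_hom_cring R "S i" "h i" by (rule assms[OF i(1)])
    show "ideal J R" using hi.ring.kernel_is_ideal i(2) by simp
  qed (use False in simp)
  ultimately show ?thesis by simp
qed

lemma rcos_common_kernel_eq_iff:
  assumes h: "\<And>i. i \<in> I \<Longrightarrow> ring_hom_cring R (S i) (h i)"
    and a: "a \<in> carrier R" and b: "b \<in> carrier R"
  defines "K \<equiv> {x \<in> carrier R. \<forall>i\<in>I. h i x = \<zero>\<^bsub>S i\<^esub>}"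
  shows "K +> a = K +> b \<longleftrightarrow> (\<forall>i\<in>I. h i a = h i b)"
proof -
  interpret K: ideal K R
    unfolding K_def using h by (rule common_kernel_ideal)
  have "K +> a = K +> b \<longleftrightarrow> a \<ominus> b \<in> K"
  proof
    assume "K +> a = K +> b"
    hence "a \<in> K +> b" using K.a_rcos_self[OF a] by simp
    thus "a \<ominus> b \<in> K" using K.a_rcos_module_minus[OF ring_axioms b a] by simp
  next
    assume "a \<ominus> b \<in> K"
    hence "a \<in> K +> b" using K.a_rcos_module_minus[OF ring_axioms b a] by simp
    thus "K +> a = K +> b" using K.a_repr_independence'[OF _ b] by simp
  qed
  also have "\<dots> \<longleftrightarrow> (\<forall>i\<in>I. h i a = h i b)"
  proof -
    have "h i (a \<ominus> b) = \<zero>\<^bsub>S i\<^esub> \<longleftrightarrow> h i a = h i b" if i: "i \<in> I" for i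
    proof -
      interpret hi: ring_hom_cring R "S i" "h i" by (rule h[OF i])
      show ?thesis using a b by simp
    qed
    moreover have "a \<ominus> b \<in> carrier R" using a b by (rule minus_closed)
    ultimately show ?thesis unfolding K_def by blast
  qed
  finally show ?thesis .
qed

end

definition induced_sum :: "'a set \<Rightarrow> ('r, 'm) ring_scheme \<Rightarrow> ('a \<Rightarrow> 'r) \<Rightarrow> ('a \<Rightarrow> int) \<Rightarrow> 'a \<Rightarrow> bool" where
  "induced_sum M R \<phi> \<kappa> Y \<longleftrightarrow> fin_comb M \<kappa> \<and> Y \<in> M \<and> lin_comb R \<phi> \<kappa> = \<phi> Y"

lemma is_sesquiad_quot_with_induced_sum:
  fixes S :: "'a sesquiad" and R :: "('a set \<Rightarrow> int) set ring"
  assumes S: "comm_monoid_zero S" and C: "monoid_congruence S C"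
    and R: "cring R" and H: "H \<in> ring_hom (monoid_ring (quot S C)) R"
    and sep: "\<And>a b. a \<in> S_carrier S \<Longrightarrow> b \<in> S_carrier S \<Longrightarrow>
                H (basis_el (cls C a)) = H (basis_el (cls C b)) \<Longrightarrow> (a, b) \<in> C"
    and zero: "H (basis_el (cls C (S_zero S))) = \<zero>\<^bsub>R\<^esub>"
  shows "is_sesquiad (quot_with S C (induced_sum (S_carrier S // C) R (\<lambda>X. H (basis_el X))))"
    (is "is_sesquiad ?Q")
proof -
  let ?Z = "monoid_ring (quot S C)" and ?\<phi> = "\<lambda>X. H (basis_el X)"
  have eq: "equiv (S_carrier S) C" using C by (rule monoid_congruence_equiv)
  have basis: "\<And>X. X \<in> S_carrier S // C \<Longrightarrow> basis_el X \<in> carrier ?Z"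
    by (simp add: basis_el_carrier quot_simps)
  show ?thesis
    unfolding is_sesquiad_def
  proof (intro conjI exI[of _ R] exI[of _ ?\<phi>] ballI allI)
    show "comm_monoid_zero ?Q" by (rule comm_monoid_zero_quot_with[OF S C])
    show "?\<phi> \<in> S_carrier ?Q \<rightarrow> carrier R"
      using basis ring_hom_closed[OF H] by (auto simp: quot_with_simps)
    show "inj_on ?\<phi> (S_carrier ?Q)"
    proof (rule inj_onI)
      fix X Y assume "X \<in> S_carrier ?Q" "Y \<in> S_carrier ?Q" "?\<phi> X = ?\<phi> Y"
      then obtain a b where "a \<in> S_carrier S" "X = cls C a" "b \<in> S_carrier S" "Y = cls C b"
        "?\<phi> (cls C a) = ?\<phi> (cls C b)"
        by (metis quot_with_simps(1) quotient_obtain_cls)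
      thus "X = Y" using sep eq by (simp add: cls_eq_iff)
    qed
    show "?\<phi> (S_one ?Q) = \<one>\<^bsub>R\<^esub>"
      using ring_hom_one[OF H] by (simp add: quot_with_simps quot_simps monoid_ring_simps)
    show "?\<phi> (S_zero ?Q) = \<zero>\<^bsub>R\<^esub>" using zero by (simp add: quot_with_simps)
    fix X Y assume "X \<in> S_carrier ?Q" "Y \<in> S_carrier ?Q"
    hence XY: "X \<in> S_carrier S // C" "Y \<in> S_carrier S // C" by (simp_all add: quot_with_simps)
    have "S_mult ?Q X Y = S_mult (quot S C) X Y" by (simp add: quot_def quot_with_def)
    moreover have "basis_el (S_mult (quot S C) X Y) = basis_el X \<otimes>\<^bsub>?Z\<^esub> basis_el Y"
      using XY by (simp add: basis_el_mult quot_simps)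
    ultimately show "?\<phi> (S_mult ?Q X Y) = ?\<phi> X \<otimes>\<^bsub>R\<^esub> ?\<phi> Y"
      using ring_hom_mult[OF H basis[OF XY(1)] basis[OF XY(2)]] by simp
  qed (use R in \<open>simp_all add: quot_with_simps induced_sum_def lin_comb_def\<close>)
qed

lemma is_congruenceI_ring_hom:
  fixes S :: "'a sesquiad" and R :: "('a set \<Rightarrow> int) set ring"
  assumes S: "comm_monoid_zero S" and C: "monoid_congruence S C"
    and R: "cring R" and H: "H \<in> ring_hom (monoid_ring (quot S C)) R"
    and sep: "\<And>a b. a \<in> S_carrier S \<Longrightarrow> b \<in> S_carrier S \<Longrightarrow>
                H (basis_el (cls C a)) = H (basis_el (cls C b)) \<Longrightarrow> (a, b) \<in> C"
    and zero: "H (basis_el (cls C (S_zero S))) = \<zero>\<^bsub>R\<^esub>"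
    and sums: "\<And>k a. S_sum S k a \<Longrightarrow> fin_comb (S_carrier S) k \<and> a \<in> S_carrier S \<and>
                 H (push_comb (cls C) k) = H (basis_el (cls C a))"
  shows "is_congruence S C"
proof -
  let ?\<phi> = "\<lambda>X. H (basis_el X)"
  let ?Q = "quot_with S C (induced_sum (S_carrier S // C) R ?\<phi>)"
  have Q: "comm_monoid_zero (quot S C)" unfolding quot_def by (rule comm_monoid_zero_quot_with[OF S C])
  have "sesq_hom S ?Q (cls C)"
    unfolding sesq_hom_def
  proof (intro conjI allI impI ballI)
    fix k a assume sk: "S_sum S k a"
    have fk: "finite (supp k)" "supp k \<subseteq> S_carrier S" and a: "a \<in> S_carrier S"
      and Hk: "H (push_comb (cls C) k) = H (basis_el (cls C a))"
      using sums[OF sk] by (auto simp: fin_comb_def supp_def)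
    let ?\<kappa> = "push_comb (cls C) k"
    have \<kappa>: "supp ?\<kappa> \<subseteq> S_carrier S // C" "finite (supp ?\<kappa>)"
      using supp_push_comb[OF fk(1), of "cls C"] fk by (auto intro: cls_in_quotient finite_subset)
    have "lin_comb R ?\<phi> ?\<kappa> = H ?\<kappa>"
      using \<kappa> ring_hom_eq_lin_comb_basis_el[OF Q R H]
      by (simp add: monoid_ring_carrier_iff quot_simps comp_def)
    with \<kappa> Hk a show "S_sum ?Q ?\<kappa> (cls C a)"
      by (simp add: quot_with_simps induced_sum_def fin_comb_def supp_def cls_in_quotient)
  qed (simp_all add: quot_with_simps quot_with_mult_cls[OF S C] cls_in_quotient)
  thus ?thesis
    using C is_sesquiad_quot_with_induced_sum[OF S C R H sep zero]
    unfolding is_congruence_def monoid_congruence_def by blast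
qed

lemma ring_hom_lin_comb_quot_char:
  fixes S :: "'a sesquiad"
  assumes S: "comm_monoid_zero S" and C: "monoid_congruence S C" and \<psi>: "mult_char S R \<psi>"
    and resp: "\<And>a b. (a, b) \<in> C \<Longrightarrow> \<psi> a = \<psi> b"
  defines "h \<equiv> lin_comb R (\<lambda>X. \<psi> (SOME x. x \<in> X))"
  shows "ring_hom_cring (monoid_ring (quot S C)) R h"
    and "\<And>a. a \<in> S_carrier S \<Longrightarrow> h (basis_el (cls C a)) = \<psi> a"
    and "\<And>k. finite (supp k) \<Longrightarrow> supp k \<subseteq> S_carrier S \<Longrightarrow> h (push_comb (cls C) k) = lin_comb R \<psi> k"
proof -
  have Q: "comm_monoid_zero (quot S C)" unfolding quot_def by (rule comm_monoid_zero_quot_with[OF S C])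
  have \<psi>': "mult_char (quot S C) R (\<lambda>X. \<psi> (SOME x. x \<in> X))"
    and cls: "\<And>a. a \<in> S_carrier S \<Longrightarrow> \<psi> (SOME x. x \<in> cls C a) = \<psi> a"
    using mult_char_quot[OF S C \<psi> resp] by auto
  interpret R: cring R by (rule mult_charD(1)[OF \<psi>])
  have \<psi>'_closed: "(\<lambda>X. \<psi> (SOME x. x \<in> X)) \<in> S_carrier S // C \<rightarrow> carrier R"
    using mult_charD(2)[OF \<psi>'] by (simp add: quot_simps)
  show "ring_hom_cring (monoid_ring (quot S C)) R h"
    unfolding h_def using \<psi>' cring_monoid_ring[OF Q] R.is_cring
    by (intro ring_hom_cring.intro ring_hom_cring_axioms.intro R.lin_comb_ring_hom)
      (use Q in \<open>auto simp: mult_char_def\<close>)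
  show "h (basis_el (cls C a)) = \<psi> a" if "a \<in> S_carrier S" for a
    using that cls mult_charD(2)[OF \<psi>] by (simp add: h_def R.lin_comb_basis_el Pi_iff)
  fix k assume fk: "finite (supp k)" "supp k \<subseteq> S_carrier S"
  have "h (push_comb (cls C) k) = lin_comb R ((\<lambda>X. \<psi> (SOME x. x \<in> X)) \<circ> cls C) k"
    unfolding h_def using \<psi>'_closed
    by (intro R.lin_comb_push_comb[OF fk, of _ "S_carrier S // C"]) (auto intro: cls_in_quotient)
  also have "\<dots> = lin_comb R \<psi> k" using fk(2) cls by (intro lin_comb_cong) auto
  finally show "h (push_comb (cls C) k) = lin_comb R \<psi> k" .
qed

lemma is_congruence_char_kernel:
  fixes S :: "'a sesquiad" and R :: "'i \<Rightarrow> ('r, 'm) ring_scheme" and \<psi> :: "'i \<Rightarrow> 'a \<Rightarrow> 'r"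
  assumes S: "comm_monoid_zero S"
    and sums_fin: "\<And>k a. S_sum S k a \<Longrightarrow> fin_comb (S_carrier S) k \<and> a \<in> S_carrier S"
    and \<psi>: "\<And>i. i \<in> I \<Longrightarrow> additive_char S (R i) (\<psi> i)"
  shows "is_congruence S (char_kernel S I \<psi>)"
proof -
  define C where "C = char_kernel S I \<psi>"
  let ?Z = "monoid_ring (quot S C)"
  have C: "monoid_congruence S C"
    unfolding C_def using \<psi> S by (intro monoid_congruence_char_kernel) (auto simp: additive_char_def)
  have Q: "comm_monoid_zero (quot S C)" unfolding quot_def by (rule comm_monoid_zero_quot_with[OF S C])
  interpret Z: cring ?Z by (rule cring_monoid_ring[OF Q])
  have resp: "\<And>i a b. i \<in> I \<Longrightarrow> (a, b) \<in> C \<Longrightarrow> \<psi> i a = \<psi> i b"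
    by (auto simp: C_def char_kernel_def)
  define h where "h i = lin_comb (R i) (\<lambda>X. \<psi> i (SOME x. x \<in> X))" for i
  have h: "ring_hom_cring ?Z (R i) (h i)"
    "\<And>a. a \<in> S_carrier S \<Longrightarrow> h i (basis_el (cls C a)) = \<psi> i a"
    "\<And>k. finite (supp k) \<Longrightarrow> supp k \<subseteq> S_carrier S \<Longrightarrow> h i (push_comb (cls C) k) = lin_comb (R i) (\<psi> i) k"
    if i: "i \<in> I" for i
    using ring_hom_lin_comb_quot_char[OF S C additive_charD(1)[OF \<psi>[OF i]] resp[OF i]]
    by (simp_all add: h_def)
  \<comment> \<open>\<open>\<int>[S/C]\<close> modulo the common kernel of the \<open>h i\<close> embeds into \<open>\<Prod>i\<in>I. R i\<close>; its elements are
    cosets, of the type \<open>('a set \<Rightarrow> int) set\<close> that \<open>is_sesquiad\<close> demands for \<open>S/C\<close>.\<close>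
  define K where "K = {x \<in> carrier ?Z. \<forall>i\<in>I. h i x = \<zero>\<^bsub>R i\<^esub>}"
  interpret K: ideal K ?Z unfolding K_def using h(1) by (rule Z.common_kernel_ideal)
  have H_eq: "\<And>x y. x \<in> carrier ?Z \<Longrightarrow> y \<in> carrier ?Z \<Longrightarrow>
      K +>\<^bsub>?Z\<^esub> x = K +>\<^bsub>?Z\<^esub> y \<longleftrightarrow> (\<forall>i\<in>I. h i x = h i y)"
    unfolding K_def using h(1) by (rule Z.rcos_common_kernel_eq_iff)
  have basis: "\<And>a. a \<in> S_carrier S \<Longrightarrow> basis_el (cls C a) \<in> carrier ?Z"
    by (simp add: basis_el_carrier quot_simps cls_in_quotient)
  have Sc: "S_zero S \<in> S_carrier S" using S by (simp add: comm_monoid_zero_def)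
  show ?thesis
    unfolding C_def[symmetric]
  proof (rule is_congruenceI_ring_hom[OF S C K.quotient_is_cring[OF Z.is_cring] K.rcos_ring_hom])
    fix a b assume "a \<in> S_carrier S" "b \<in> S_carrier S"
      and "K +>\<^bsub>?Z\<^esub> basis_el (cls C a) = K +>\<^bsub>?Z\<^esub> basis_el (cls C b)"
    thus "(a, b) \<in> C" using H_eq basis h(2) by (auto simp: C_def char_kernel_def)
  next
    have "K +>\<^bsub>?Z\<^esub> basis_el (cls C (S_zero S)) = K +>\<^bsub>?Z\<^esub> \<zero>\<^bsub>?Z\<^esub>"
    proof (subst H_eq[OF basis[OF Sc] Z.zero_closed], intro ballI)
      fix i assume i: "i \<in> I"
      interpret hi: ring_hom_cring ?Z "R i" "h i" by (rule h(1)[OF i])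
      show "h i (basis_el (cls C (S_zero S))) = h i \<zero>\<^bsub>?Z\<^esub>"
        using h(2)[OF i Sc] mult_charD(4)[OF additive_charD(1)[OF \<psi>[OF i]]] by simp
    qed
    thus "K +>\<^bsub>?Z\<^esub> basis_el (cls C (S_zero S)) = \<zero>\<^bsub>?Z Quot K\<^esub>"
      using ring_hom_zero[OF K.rcos_ring_hom Z.ring_axioms] K.quotient_is_cring[OF Z.is_cring]
      by (simp add: cring.axioms(1))
  next
    fix k a assume sk: "S_sum S k a"
    have fk: "finite (supp k)" "supp k \<subseteq> S_carrier S" and a: "a \<in> S_carrier S"
      using sums_fin[OF sk] by (auto simp: fin_comb_def supp_def)
    have \<kappa>: "push_comb (cls C) k \<in> carrier ?Z"
      using supp_push_comb[OF fk(1), of "cls C"] fk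
      by (auto simp: monoid_ring_carrier_iff quot_simps intro: cls_in_quotient finite_subset)
    have "\<forall>i\<in>I. h i (push_comb (cls C) k) = h i (basis_el (cls C a))"
      using h(2)[OF _ a] h(3)[OF _ fk] additive_charD(2)[OF \<psi> sk] by simp
    thus "fin_comb (S_carrier S) k \<and> a \<in> S_carrier S \<and>
        K +>\<^bsub>?Z\<^esub> push_comb (cls C) k = K +>\<^bsub>?Z\<^esub> basis_el (cls C a)"
      using sums_fin[OF sk] H_eq[OF \<kappa> basis[OF a]] by simp
  qed
qed

definition kernel_char :: "'a sesquiad \<Rightarrow> ('a \<times> 'a) set \<Rightarrow> ('r, 'm) ring_scheme \<Rightarrow> ('a \<Rightarrow> 'r) \<Rightarrow> bool" where
  "kernel_char S C R \<psi> \<longleftrightarrow> additive_char S R \<psi> \<and>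
     (\<forall>a\<in>S_carrier S. \<forall>b\<in>S_carrier S. \<psi> a = \<psi> b \<longleftrightarrow> (a, b) \<in> C)"

lemma kernel_char_sep:
  "kernel_char S C R \<psi> \<Longrightarrow> a \<in> S_carrier S \<Longrightarrow> b \<in> S_carrier S \<Longrightarrow> \<psi> a = \<psi> b \<longleftrightarrow> (a, b) \<in> C"
  by (simp add: kernel_char_def)

lemma congruence_kernel_char:
  fixes S :: "'a sesquiad"
  assumes C: "is_congruence S C"
    and sums_fin: "\<And>k a. S_sum S k a \<Longrightarrow> fin_comb (S_carrier S) k \<and> a \<in> S_carrier S"
  shows "\<exists>(R :: ('a set \<Rightarrow> int) set ring) \<psi>. kernel_char S C R \<psi>"
proof -
  have eq: "equiv (S_carrier S) C" using C by (simp add: is_congruence_def)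
  obtain \<sigma> where Q: "is_sesquiad (quot_with S C \<sigma>)" and hom: "sesq_hom S (quot_with S C \<sigma>) (cls C)"
    using C by (auto simp: is_congruence_def)
  let ?Q = "quot_with S C \<sigma>"
  from Q obtain R :: "('a set \<Rightarrow> int) set ring" and \<phi> where
    R: "cring R" and \<phi>: "\<phi> \<in> S_carrier ?Q \<rightarrow> carrier R" and inj: "inj_on \<phi> (S_carrier ?Q)"
    and one: "\<phi> (S_one ?Q) = \<one>\<^bsub>R\<^esub>" and zero: "\<phi> (S_zero ?Q) = \<zero>\<^bsub>R\<^esub>"
    and mult: "\<forall>x\<in>S_carrier ?Q. \<forall>y\<in>S_carrier ?Q. \<phi> (S_mult ?Q x y) = \<phi> x \<otimes>\<^bsub>R\<^esub> \<phi> y"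
    and sums: "\<And>k a. S_sum ?Q k a \<Longrightarrow> lin_comb R \<phi> k = \<phi> a"
    unfolding is_sesquiad_def lin_comb_def by blast
  interpret R: cring R by (rule R)
  have cls: "\<And>a. a \<in> S_carrier S \<Longrightarrow> cls C a \<in> S_carrier ?Q"
    by (simp add: quot_with_simps cls_in_quotient)
  show ?thesis
    unfolding kernel_char_def
  proof (intro exI[of _ R] exI[of _ "\<phi> \<circ> cls C"] conjI ballI)
    fix a b assume a: "a \<in> S_carrier S" and b: "b \<in> S_carrier S"
    have "(\<phi> \<circ> cls C) a = (\<phi> \<circ> cls C) b \<longleftrightarrow> cls C a = cls C b"
      using inj cls[OF a] cls[OF b] by (auto dest: inj_onD)
    also have "\<dots> \<longleftrightarrow> (a, b) \<in> C" using eq a b by (rule cls_eq_iff)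
    finally show "(\<phi> \<circ> cls C) a = (\<phi> \<circ> cls C) b \<longleftrightarrow> (a, b) \<in> C" .
  next
    have "lin_comb R (\<phi> \<circ> cls C) k = \<phi> (cls C a)" if sk: "S_sum S k a" for k a
    proof -
      have fk: "finite (supp k)" "supp k \<subseteq> S_carrier S"
        using sums_fin[OF sk] by (auto simp: fin_comb_def supp_def)
      have "lin_comb R (\<phi> \<circ> cls C) k = lin_comb R \<phi> (push_comb (cls C) k)"
        using \<phi> cls by (intro R.lin_comb_push_comb[OF fk, symmetric]) auto
      also have "\<dots> = \<phi> (cls C a)" using hom sk sums by (simp add: sesq_hom_def)
      finally show ?thesis .
    qed
    thus "additive_char S R (\<phi> \<circ> cls C)"
      using hom R \<phi> one zero mult cls
      by (auto simp: additive_char_def mult_char_def sesq_hom_def Pi_iff)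
  qed
qed

lemma sesquiad_comm_monoid_zero: "is_sesquiad A \<Longrightarrow> comm_monoid_zero A"
  by (simp add: is_sesquiad_def)

lemma sesquiad_sum_fin_comb:
  "is_sesquiad A \<Longrightarrow> S_sum A k a \<Longrightarrow> fin_comb (S_carrier A) k \<and> a \<in> S_carrier A"
  unfolding is_sesquiad_def by blast

lemma quot_sum_fin_comb:
  "S_sum (quot A C) \<kappa> Y \<Longrightarrow> fin_comb (S_carrier (quot A C)) \<kappa> \<and> Y \<in> S_carrier (quot A C)"
  by (simp add: quot_simps quot_sum_def)

lemma is_congruence_Nil_cong:
  fixes A :: "'a sesquiad"
  assumes A: "is_sesquiad A"
  shows "is_congruence A (Nil_cong A)"
proof -
  have "\<forall>C\<in>spec_c A. \<exists>R\<psi> :: ('a set \<Rightarrow> int) set ring \<times> ('a \<Rightarrow> ('a set \<Rightarrow> int) set).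
      kernel_char A C (fst R\<psi>) (snd R\<psi>)"
  proof
    fix C assume "C \<in> spec_c A"
    hence "is_congruence A C" by (simp add: spec_c_def is_prime_congruence_def)
    then obtain R :: "('a set \<Rightarrow> int) set ring" and \<psi> where "kernel_char A C R \<psi>"
      using congruence_kernel_char sesquiad_sum_fin_comb[OF A] by blast
    thus "\<exists>R\<psi> :: ('a set \<Rightarrow> int) set ring \<times> ('a \<Rightarrow> ('a set \<Rightarrow> int) set).
        kernel_char A C (fst R\<psi>) (snd R\<psi>)"
      by (intro exI[of _ "(R, \<psi>)"]) simp
  qed
  from bchoice[OF this] obtain R\<psi> :: "('a \<times> 'a) set \<Rightarrow> ('a set \<Rightarrow> int) set ring \<times> ('a \<Rightarrow> ('a set \<Rightarrow> int) set)" where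
    R\<psi>: "\<forall>C\<in>spec_c A. kernel_char A C (fst (R\<psi> C)) (snd (R\<psi> C))"
    by blast
  define \<psi> where "\<psi> C = snd (R\<psi> C)" for C
  have \<psi>: "\<And>C. C \<in> spec_c A \<Longrightarrow> additive_char A (fst (R\<psi> C)) (\<psi> C)"
    using R\<psi> by (simp add: \<psi>_def kernel_char_def)
  have "Nil_cong A = char_kernel A (spec_c A) \<psi>"
  proof (rule Set.set_eqI)
    fix p :: "'a \<times> 'a"
    obtain a b where p: "p = (a, b)" by (cases p)
    have "a \<in> S_carrier A \<Longrightarrow> b \<in> S_carrier A \<Longrightarrow> C \<in> spec_c A \<Longrightarrow> \<psi> C a = \<psi> C b \<longleftrightarrow> (a, b) \<in> C" for C
      using R\<psi> unfolding \<psi>_def by (intro kernel_char_sep) auto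
    thus "p \<in> Nil_cong A \<longleftrightarrow> p \<in> char_kernel A (spec_c A) \<psi>"
      unfolding p Nil_cong_def char_kernel_def by auto
  qed
  moreover have "is_congruence A (char_kernel A (spec_c A) \<psi>)"
    by (rule is_congruence_char_kernel[where R = "\<lambda>C. fst (R\<psi> C)", OF sesquiad_comm_monoid_zero[OF A]
          sesquiad_sum_fin_comb[OF A] \<psi>])
  ultimately show ?thesis by simp
qed
section \<open>Spectra of quotients\<close>

lemma (in cring) lin_comb_cong_ideal:
  fixes A :: "'s sesquiad"
  assumes A: "comm_monoid_zero A" and \<psi>: "additive_char A R \<psi>"
    and sums_fin: "\<And>k a. S_sum A k a \<Longrightarrow> fin_comb (S_carrier A) k \<and> a \<in> S_carrier A"
    and C: "C \<subseteq> S_carrier A \<times> S_carrier A" and resp: "\<And>a b. (a, b) \<in> C \<Longrightarrow> \<psi> a = \<psi> b"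
    and \<kappa>: "\<kappa> \<in> cong_ideal A C"
  shows "lin_comb R \<psi> \<kappa> = \<zero>"
proof -
  let ?Z = "monoid_ring A"
  interpret Z: cring ?Z by (rule cring_monoid_ring[OF A])
  have \<psi>_closed: "\<psi> \<in> S_carrier A \<rightarrow> carrier R" and \<psi>_zero: "\<psi> (S_zero A) = \<zero>"
    using mult_charD[OF additive_charD(1)[OF \<psi>]] by simp_all
  have "lin_comb R \<psi> \<in> ring_hom ?Z R"
    using mult_charD[OF additive_charD(1)[OF \<psi>]] by (intro lin_comb_ring_hom[OF A]) simp_all
  interpret H: ring_hom_ring ?Z R "lin_comb R \<psi>"
    by (rule ring_hom_ringI2[OF Z.ring_axioms ring_axioms]) fact
  let ?Ker = "a_kernel ?Z R (lin_comb R \<psi>)"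
  have basis: "\<And>a. a \<in> S_carrier A \<Longrightarrow> lin_comb R \<psi> (basis_el a) = \<psi> a"
    using \<psi>_closed by (intro lin_comb_basis_el) auto
  have diff_in_Ker: "(\<lambda>z. k z - basis_el a z) \<in> ?Ker"
    if k: "finite (supp k)" "supp k \<subseteq> S_carrier A" and a: "a \<in> S_carrier A"
      and eq: "lin_comb R \<psi> k = \<psi> a" for k a
  proof -
    have "\<psi> a \<in> carrier R" using \<psi>_closed a by blast
    moreover have "lin_comb R \<psi> (\<lambda>z. k z - basis_el a z) = lin_comb R \<psi> k \<ominus> lin_comb R \<psi> (basis_el a)"
      using a by (intro lin_comb_diff[OF k(1) _ \<psi>_closed k(2)]) auto
    ultimately have "lin_comb R \<psi> (\<lambda>z. k z - basis_el a z) = \<zero>"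
      using eq basis[OF a] by simp
    moreover have "(\<lambda>z. k z - basis_el a z) \<in> carrier ?Z" using k a by (rule diff_basis_el_carrier)
    ultimately show ?thesis unfolding a_kernel_def' by blast
  qed
  have "{basis_el (S_zero A)} \<union> {(\<lambda>z. k z - basis_el a z) | k a. S_sum A k a} \<union>
      {(\<lambda>z. basis_el a z - basis_el b z) | a b. (a, b) \<in> C} \<subseteq> ?Ker"
  proof (intro Un_least subsetI)
    fix x assume "x \<in> {basis_el (S_zero A)}"
    hence x: "x = basis_el (S_zero A)" by simp
    have z: "S_zero A \<in> S_carrier A" using A by (simp add: comm_monoid_zero_def)
    have "lin_comb R \<psi> x = \<zero>" unfolding x using basis[OF z] \<psi>_zero by simp
    moreover have "x \<in> carrier ?Z" unfolding x using z by (rule basis_el_carrier)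
    ultimately show "x \<in> ?Ker" unfolding a_kernel_def' by blast
  next
    fix x assume "x \<in> {(\<lambda>z. k z - basis_el a z) | k a. S_sum A k a}"
    then obtain k a where x: "x = (\<lambda>z. k z - basis_el a z)" and sk: "S_sum A k a" by blast
    have "finite (supp k)" "supp k \<subseteq> S_carrier A" "a \<in> S_carrier A"
      using sums_fin[OF sk] by (auto simp: fin_comb_def supp_def)
    thus "x \<in> ?Ker" unfolding x using additive_charD(2)[OF \<psi> sk] by (rule diff_in_Ker)
  next
    fix x assume "x \<in> {(\<lambda>z. basis_el a z - basis_el b z) | a b. (a, b) \<in> C}"
    then obtain a b where x: "x = (\<lambda>z. basis_el a z - basis_el b z)" and ab: "(a, b) \<in> C" by blast
    have a: "a \<in> S_carrier A" and b: "b \<in> S_carrier A" using ab C by blast+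
    have "lin_comb R \<psi> (basis_el a) = \<psi> b" using basis[OF a] resp[OF ab] by simp
    with a b show "x \<in> ?Ker" unfolding x by (intro diff_in_Ker) simp_all
  qed
  hence "cong_ideal A C \<subseteq> ?Ker"
    unfolding cong_ideal_def by (rule Z.genideal_minimal[OF H.kernel_is_ideal])
  hence "\<kappa> \<in> ?Ker" using \<kappa> by blast
  thus ?thesis unfolding a_kernel_def' by blast
qed

lemma additive_char_quot:
  fixes A :: "'a sesquiad"
  assumes A: "comm_monoid_zero A" and C: "monoid_congruence A C" and \<psi>: "additive_char A R \<psi>"
    and sums_fin: "\<And>k a. S_sum A k a \<Longrightarrow> fin_comb (S_carrier A) k \<and> a \<in> S_carrier A"
    and resp: "\<And>a b. (a, b) \<in> C \<Longrightarrow> \<psi> a = \<psi> b"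
  shows "additive_char (quot A C) R (\<lambda>X. \<psi> (SOME x. x \<in> X))"
proof -
  let ?\<psi>' = "\<lambda>X. \<psi> (SOME x. x \<in> X)"
  have eq: "equiv (S_carrier A) C" using C by (rule monoid_congruence_equiv)
  have \<psi>_char: "mult_char A R \<psi>" by (rule additive_charD(1)[OF \<psi>])
  interpret R: cring R by (rule mult_charD(1)[OF \<psi>_char])
  have \<psi>_closed: "\<psi> \<in> S_carrier A \<rightarrow> carrier R" by (rule mult_charD(2)[OF \<psi>_char])
  have \<psi>': "mult_char (quot A C) R ?\<psi>'" by (rule mult_char_quot(1)[OF A C \<psi>_char resp])
  have cls: "\<And>x. x \<in> S_carrier A \<Longrightarrow> ?\<psi>' (cls C x) = \<psi> x"
    by (rule mult_char_quot(2)[OF A C \<psi>_char resp])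
  have "lin_comb R ?\<psi>' \<kappa> = ?\<psi>' Y" if sum: "quot_sum A C \<kappa> Y" for \<kappa> Y
  proof -
    obtain k a where k: "fin_comb (S_carrier A) k" and aY: "a \<in> Y" and \<kappa>: "push_comb (cls C) k = \<kappa>"
      and ideal: "(\<lambda>z. k z - basis_el a z) \<in> cong_ideal A C" and Y: "Y \<in> S_carrier A // C"
      using sum unfolding quot_sum_def by blast
    have fk: "finite (supp k)" "supp k \<subseteq> S_carrier A" using k by (auto simp: fin_comb_def supp_def)
    obtain b where b: "b \<in> S_carrier A" "Y = cls C b" using Y by (metis quotient_obtain_cls)
    have ba: "(b, a) \<in> C" using aY b by (simp add: cls_def)
    hence a: "a \<in> S_carrier A" using eq by (auto simp: equiv_def refl_on_def)
    have Ya: "Y = cls C a" using b ba eq a by (simp add: cls_eq_iff)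
    have \<psi>a: "\<psi> a \<in> carrier R" using \<psi>_closed a by blast
    have "lin_comb R \<psi> k \<ominus>\<^bsub>R\<^esub> \<psi> a = lin_comb R \<psi> (\<lambda>z. k z - basis_el a z)"
      using a \<psi>a by (simp add: R.lin_comb_diff[OF fk(1) _ \<psi>_closed fk(2)] R.lin_comb_basis_el)
    also have "\<dots> = \<zero>\<^bsub>R\<^esub>"
    proof (rule R.lin_comb_cong_ideal[OF A \<psi> sums_fin _ resp ideal])
      show "C \<subseteq> S_carrier A \<times> S_carrier A" using eq by (simp add: equiv_def refl_on_def)
    qed
    finally have lk: "lin_comb R \<psi> k = \<psi> a"
      using \<psi>a R.lin_comb_closed[OF fk(1)] \<psi>_closed fk(2) by (simp add: Pi_iff subset_iff)
    have "lin_comb R ?\<psi>' \<kappa> = lin_comb R (?\<psi>' \<circ> cls C) k"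
      unfolding \<kappa>[symmetric]
    proof (rule R.lin_comb_push_comb[OF fk, of _ "S_carrier A // C"])
      show "cls C \<in> S_carrier A \<rightarrow> S_carrier A // C" by (simp add: cls_in_quotient)
      show "?\<psi>' \<in> S_carrier A // C \<rightarrow> carrier R"
        using mult_charD(2)[OF \<psi>'] by (simp add: quot_simps)
    qed
    also have "\<dots> = lin_comb R \<psi> k" using fk(2) cls by (intro lin_comb_cong) auto
    also have "\<dots> = ?\<psi>' Y" using lk cls[OF a] Ya by simp
    finally show ?thesis .
  qed
  thus ?thesis using \<psi>' by (simp add: additive_char_def quot_simps)
qed

lemma quot_sum_push_comb:
  fixes A :: "'a sesquiad"
  assumes A: "comm_monoid_zero A"
    and sums_fin: "\<And>k a. S_sum A k a \<Longrightarrow> fin_comb (S_carrier A) k \<and> a \<in> S_carrier A"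
    and C: "equiv (S_carrier A) C" and sk: "S_sum A k a"
  shows "quot_sum A C (push_comb (cls C) k) (cls C a)"
proof -
  interpret Z: cring "monoid_ring A" by (rule cring_monoid_ring[OF A])
  have fk: "finite (supp k)" "supp k \<subseteq> S_carrier A" and a: "a \<in> S_carrier A"
    using sums_fin[OF sk] by (auto simp: fin_comb_def supp_def)
  have gens: "{basis_el (S_zero A)} \<union> {(\<lambda>z. k z - basis_el a z) | k a. S_sum A k a} \<union>
      {(\<lambda>z. basis_el a z - basis_el b z) | a b. (a, b) \<in> C} \<subseteq> carrier (monoid_ring A)"
  proof (intro Un_least subsetI)
    fix x assume "x \<in> {basis_el (S_zero A)}"
    thus "x \<in> carrier (monoid_ring A)" using A by (simp add: basis_el_carrier comm_monoid_zero_def)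
  next
    fix x assume "x \<in> {(\<lambda>z. k z - basis_el a z) | k a. S_sum A k a}"
    then obtain k a where x: "x = (\<lambda>z. k z - basis_el a z)" and sk: "S_sum A k a" by blast
    have "finite (supp k)" "supp k \<subseteq> S_carrier A" "a \<in> S_carrier A"
      using sums_fin[OF sk] by (auto simp: fin_comb_def supp_def)
    thus "x \<in> carrier (monoid_ring A)" unfolding x by (rule diff_basis_el_carrier)
  next
    fix x assume "x \<in> {(\<lambda>z. basis_el a z - basis_el b z) | a b. (a, b) \<in> C}"
    then obtain a b where x: "x = (\<lambda>z. basis_el a z - basis_el b z)" and ab: "(a, b) \<in> C" by blast
    have "a \<in> S_carrier A" "b \<in> S_carrier A" using ab C by (auto simp: equiv_def refl_on_def)
    thus "x \<in> carrier (monoid_ring A)" unfolding x by (intro diff_basis_el_carrier) simp_all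
  qed
  have "(\<lambda>z. k z - basis_el a z) \<in> cong_ideal A C"
    using Z.genideal_self[OF gens] sk unfolding cong_ideal_def by blast
  moreover have "supp (push_comb (cls C) k) \<subseteq> S_carrier A // C" "finite (supp (push_comb (cls C) k))"
    using supp_push_comb[OF fk(1), of "cls C"] fk by (auto intro: cls_in_quotient finite_subset)
  moreover have "a \<in> cls C a" using C a by (auto simp: cls_def equiv_def refl_on_def)
  ultimately show ?thesis unfolding quot_sum_def
    using sums_fin[OF sk] a by (auto simp: fin_comb_def supp_def intro!: cls_in_quotient)
qed

lemma additive_char_comp_cls:
  fixes A :: "'a sesquiad"
  assumes A: "comm_monoid_zero A" and C: "monoid_congruence A C"
    and sums_fin: "\<And>k a. S_sum A k a \<Longrightarrow> fin_comb (S_carrier A) k \<and> a \<in> S_carrier A"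
    and \<chi>: "additive_char (quot A C) R \<chi>"
  shows "additive_char A R (\<chi> \<circ> cls C)"
proof -
  interpret R: cring R using \<chi> by (simp add: additive_char_def mult_char_def)
  have eq: "equiv (S_carrier A) C" using C by (rule monoid_congruence_equiv)
  have \<chi>_closed: "\<chi> \<in> S_carrier A // C \<rightarrow> carrier R"
    using \<chi> by (simp add: additive_char_def mult_char_def quot_simps)
  have "lin_comb R (\<chi> \<circ> cls C) k = \<chi> (cls C a)" if sk: "S_sum A k a" for k a
  proof -
    have fk: "finite (supp k)" "supp k \<subseteq> S_carrier A"
      using sums_fin[OF sk] by (auto simp: fin_comb_def supp_def)
    have "lin_comb R (\<chi> \<circ> cls C) k = lin_comb R \<chi> (push_comb (cls C) k)"
      using \<chi>_closed by (intro R.lin_comb_push_comb[OF fk, symmetric]) (auto intro: cls_in_quotient)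
    also have "\<dots> = \<chi> (cls C a)"
      using \<chi> quot_sum_push_comb[OF A sums_fin eq sk] by (simp add: additive_char_def quot_simps)
    finally show ?thesis .
  qed
  moreover have "\<chi> (cls C (S_mult A x y)) = \<chi> (cls C x) \<otimes>\<^bsub>R\<^esub> \<chi> (cls C y)"
    if x: "x \<in> S_carrier A" and y: "y \<in> S_carrier A" for x y
  proof -
    have "cls C (S_mult A x y) = S_mult (quot A C) (cls C x) (cls C y)"
      unfolding quot_def by (rule quot_with_mult_cls[OF A C x y, symmetric])
    thus ?thesis
      using mult_charD(5)[OF additive_charD(1)[OF \<chi>]] x y by (simp add: quot_simps cls_in_quotient)
  qed
  ultimately show ?thesis
    using \<chi> \<chi>_closed by (auto simp: additive_char_def mult_char_def quot_simps intro: cls_in_quotient)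
qed

lemma prime_congruence_spec_map_cls:
  fixes A :: "'a sesquiad"
  assumes A: "comm_monoid_zero A"
    and sums_fin: "\<And>k a. S_sum A k a \<Longrightarrow> fin_comb (S_carrier A) k \<and> a \<in> S_carrier A"
    and C: "is_congruence A C" and E: "is_prime_congruence (quot A C) E"
  shows "is_prime_congruence A (spec_map A (cls C) E)"
proof -
  let ?Q = "quot A C"
  have mC: "monoid_congruence A C" using C by (rule congruence_imp_monoid_congruence)
  have E_cong: "is_congruence ?Q E" using E by (simp add: is_prime_congruence_def)
  obtain R :: "('a set set \<Rightarrow> int) set ring" and \<chi> where "kernel_char ?Q E R \<chi>"
    using congruence_kernel_char[OF E_cong quot_sum_fin_comb] by blast
  hence \<chi>: "additive_char ?Q R \<chi>"
    and sep: "\<And>X Y. X \<in> S_carrier ?Q \<Longrightarrow> Y \<in> S_carrier ?Q \<Longrightarrow> \<chi> X = \<chi> Y \<longleftrightarrow> (X, Y) \<in> E"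
    by (simp_all add: kernel_char_def)
  have cls: "\<And>a. a \<in> S_carrier A \<Longrightarrow> cls C a \<in> S_carrier ?Q" by (simp add: quot_simps cls_in_quotient)
  have "spec_map A (cls C) E = char_kernel A (UNIV :: unit set) (\<lambda>_. \<chi> \<circ> cls C)"
  proof (rule Set.set_eqI)
    fix p :: "'a \<times> 'a"
    obtain a b where p: "p = (a, b)" by (cases p)
    have "a \<in> S_carrier A \<Longrightarrow> b \<in> S_carrier A \<Longrightarrow> (cls C a, cls C b) \<in> E \<longleftrightarrow> \<chi> (cls C a) = \<chi> (cls C b)"
      using sep[OF cls cls] by simp
    thus "p \<in> spec_map A (cls C) E \<longleftrightarrow> p \<in> char_kernel A (UNIV :: unit set) (\<lambda>_. \<chi> \<circ> cls C)"
      unfolding p spec_map_def char_kernel_def by auto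
  qed
  hence cong: "is_congruence A (spec_map A (cls C) E)"
    using is_congruence_char_kernel[where R = "\<lambda>_. R", OF A sums_fin additive_char_comp_cls[OF A mC sums_fin \<chi>]]
    by simp
  have mult: "\<And>a b. a \<in> S_carrier A \<Longrightarrow> b \<in> S_carrier A \<Longrightarrow>
      S_mult ?Q (cls C a) (cls C b) = cls C (S_mult A a b)"
    unfolding quot_def by (rule quot_with_mult_cls[OF A mC])
  have Sc: "S_one A \<in> S_carrier A" "S_zero A \<in> S_carrier A"
    "\<And>x y. x \<in> S_carrier A \<Longrightarrow> y \<in> S_carrier A \<Longrightarrow> S_mult A x y \<in> S_carrier A"
    using A by (auto simp: comm_monoid_zero_def)
  show ?thesis
    unfolding is_prime_congruence_def
  proof (intro conjI ballI impI cong)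
    show "(S_one A, S_zero A) \<notin> spec_map A (cls C) E"
      using E by (simp add: spec_map_def is_prime_congruence_def quot_simps)
  next
    fix a b f assume abf: "a \<in> S_carrier A" "b \<in> S_carrier A" "f \<in> S_carrier A"
      and "(S_mult A a f, S_mult A b f) \<in> spec_map A (cls C) E"
    hence "(S_mult ?Q (cls C a) (cls C f), S_mult ?Q (cls C b) (cls C f)) \<in> E"
      by (simp add: spec_map_def mult)
    hence "(cls C a, cls C b) \<in> E \<or> (cls C f, S_zero ?Q) \<in> E"
      using E cls abf unfolding is_prime_congruence_def by blast
    thus "(a, b) \<in> spec_map A (cls C) E \<or> (f, S_zero A) \<in> spec_map A (cls C) E"
      using abf Sc by (auto simp: spec_map_def quot_simps)
  qed
qed

text \<open>Classes are compared through chosen representatives; for \<open>N \<subseteq> C\<close> the choice does not matter.\<close>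

definition lift_cong :: "'a sesquiad \<Rightarrow> ('a \<times> 'a) set \<Rightarrow> ('a \<times> 'a) set \<Rightarrow> ('a set \<times> 'a set) set" where
  "lift_cong A N C = {(X, Y). X \<in> S_carrier A // N \<and> Y \<in> S_carrier A // N \<and>
     ((SOME x. x \<in> X), (SOME y. y \<in> Y)) \<in> C}"

lemma cls_in_lift_cong_iff:
  assumes N: "equiv (S_carrier A) N" and C: "equiv (S_carrier A) C" and NC: "N \<subseteq> C"
    and a: "a \<in> S_carrier A" and b: "b \<in> S_carrier A"
  shows "(cls N a, cls N b) \<in> lift_cong A N C \<longleftrightarrow> (a, b) \<in> C"
proof -
  let ?a' = "SOME x. x \<in> cls N a" and ?b' = "SOME x. x \<in> cls N b"
  have aa': "(a, ?a') \<in> C" "(b, ?b') \<in> C"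
    using some_in_cls[OF N a] some_in_cls[OF N b] NC by blast+
  hence a': "?a' \<in> S_carrier A" "?b' \<in> S_carrier A" using C by (auto simp: equiv_def refl_on_def)
  have "cls C a = cls C ?a'" "cls C b = cls C ?b'"
    using cls_eq_iff[OF C a a'(1)] cls_eq_iff[OF C b a'(2)] aa' by simp_all
  hence "(?a', ?b') \<in> C \<longleftrightarrow> (a, b) \<in> C"
    using cls_eq_iff[OF C a'] cls_eq_iff[OF C a b] by simp
  thus ?thesis using a b by (simp add: lift_cong_def cls_in_quotient)
qed

lemma spec_map_lift_cong:
  assumes N: "equiv (S_carrier A) N" and C: "equiv (S_carrier A) C" and NC: "N \<subseteq> C"
  shows "spec_map A (cls N) (lift_cong A N C) = C"
proof (rule Set.set_eqI)
  fix p :: "'a \<times> 'a"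
  obtain a b where p: "p = (a, b)" by (cases p)
  have "(a, b) \<in> C \<Longrightarrow> a \<in> S_carrier A \<and> b \<in> S_carrier A"
    using C by (auto simp: equiv_def refl_on_def)
  thus "p \<in> spec_map A (cls N) (lift_cong A N C) \<longleftrightarrow> p \<in> C"
    unfolding p spec_map_def using cls_in_lift_cong_iff[OF N C NC] by auto
qed

lemma lift_cong_spec_map:
  assumes N: "equiv (S_carrier A) N" and E: "E \<subseteq> (S_carrier A // N) \<times> (S_carrier A // N)"
  shows "lift_cong A N (spec_map A (cls N) E) = E"
proof (rule Set.set_eqI)
  fix p :: "'a set \<times> 'a set"
  obtain X Y where p: "p = (X, Y)" by (cases p)
  show "p \<in> lift_cong A N (spec_map A (cls N) E) \<longleftrightarrow> p \<in> E"
  proof (cases "X \<in> S_carrier A // N \<and> Y \<in> S_carrier A // N")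
    case True
    thus ?thesis
      using some_in_quotient[OF N] unfolding p lift_cong_def spec_map_def by simp
  next
    case False thus ?thesis unfolding p lift_cong_def using E by blast
  qed
qed

lemma prime_congruence_lift_cong:
  fixes A :: "'a sesquiad"
  assumes A: "is_sesquiad A" and N: "is_congruence A N"
    and C: "is_prime_congruence A C" and NC: "N \<subseteq> C"
  shows "is_prime_congruence (quot A N) (lift_cong A N C)"
proof -
  let ?M = "S_carrier A" and ?Q = "quot A N"
  have A_cmz: "comm_monoid_zero A" by (rule sesquiad_comm_monoid_zero[OF A])
  have mN: "monoid_congruence A N" by (rule congruence_imp_monoid_congruence[OF N])
  have eqN: "equiv ?M N" by (rule monoid_congruence_equiv[OF mN])
  have C_cong: "is_congruence A C" using C by (simp add: is_prime_congruence_def)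
  have eqC: "equiv ?M C" using C_cong by (simp add: is_congruence_def)
  obtain R :: "('a set \<Rightarrow> int) set ring" and \<psi> where \<psi>: "kernel_char A C R \<psi>"
    using congruence_kernel_char[OF C_cong] sesquiad_sum_fin_comb[OF A] by blast
  have resp: "\<And>a b. (a, b) \<in> N \<Longrightarrow> \<psi> a = \<psi> b"
    using NC eqN kernel_char_sep[OF \<psi>] by (auto simp: equiv_def refl_on_def)
  let ?\<psi>' = "\<lambda>X. \<psi> (SOME x. x \<in> X)"
  have \<psi>': "additive_char ?Q R ?\<psi>'"
    using \<psi> by (intro additive_char_quot[OF A_cmz mN _ sesquiad_sum_fin_comb[OF A] resp])
      (simp add: kernel_char_def)
  have "lift_cong A N C = char_kernel ?Q (UNIV :: unit set) (\<lambda>_. ?\<psi>')"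
  proof (rule Set.set_eqI)
    fix p :: "'a set \<times> 'a set"
    obtain X Y where p: "p = (X, Y)" by (cases p)
    have "X \<in> ?M // N \<Longrightarrow> Y \<in> ?M // N \<Longrightarrow> ((SOME x. x \<in> X), (SOME y. y \<in> Y)) \<in> C \<longleftrightarrow> ?\<psi>' X = ?\<psi>' Y"
      using kernel_char_sep[OF \<psi>] some_in_quotient(1)[OF eqN] by simp
    thus "p \<in> lift_cong A N C \<longleftrightarrow> p \<in> char_kernel ?Q (UNIV :: unit set) (\<lambda>_. ?\<psi>')"
      unfolding p lift_cong_def char_kernel_def quot_simps by auto
  qed
  moreover have "is_congruence ?Q (char_kernel ?Q (UNIV :: unit set) (\<lambda>_. ?\<psi>'))"
    by (rule is_congruence_char_kernel[where R = "\<lambda>_. R", OF _ quot_sum_fin_comb \<psi>'])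
      (unfold quot_def, rule comm_monoid_zero_quot_with[OF A_cmz mN])
  ultimately have cong: "is_congruence ?Q (lift_cong A N C)" by simp
  have Sc: "S_one A \<in> ?M" "S_zero A \<in> ?M" "\<And>x y. x \<in> ?M \<Longrightarrow> y \<in> ?M \<Longrightarrow> S_mult A x y \<in> ?M"
    using A_cmz by (auto simp: comm_monoid_zero_def)
  have mult: "\<And>a b. a \<in> ?M \<Longrightarrow> b \<in> ?M \<Longrightarrow> S_mult ?Q (cls N a) (cls N b) = cls N (S_mult A a b)"
    unfolding quot_def by (rule quot_with_mult_cls[OF A_cmz mN])
  have lift: "\<And>a b. a \<in> ?M \<Longrightarrow> b \<in> ?M \<Longrightarrow> (cls N a, cls N b) \<in> lift_cong A N C \<longleftrightarrow> (a, b) \<in> C"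
    by (rule cls_in_lift_cong_iff[OF eqN eqC NC])
  show ?thesis
    unfolding is_prime_congruence_def
  proof (intro conjI ballI impI cong)
    show "(S_one ?Q, S_zero ?Q) \<notin> lift_cong A N C"
      using lift[OF Sc(1,2)] C by (simp add: quot_simps is_prime_congruence_def)
  next
    fix X Y F assume "X \<in> S_carrier ?Q" "Y \<in> S_carrier ?Q" "F \<in> S_carrier ?Q"
      and XYF: "(S_mult ?Q X F, S_mult ?Q Y F) \<in> lift_cong A N C"
    then obtain a b f where abf: "a \<in> ?M" "X = cls N a" "b \<in> ?M" "Y = cls N b" "f \<in> ?M" "F = cls N f"
      by (metis quot_simps(1) quotient_obtain_cls)
    have "(S_mult A a f, S_mult A b f) \<in> C" using XYF abf mult lift Sc by simp
    hence "(a, b) \<in> C \<or> (f, S_zero A) \<in> C" using C abf unfolding is_prime_congruence_def by blast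
    thus "(X, Y) \<in> lift_cong A N C \<or> (F, S_zero ?Q) \<in> lift_cong A N C"
      using lift abf Sc by (simp add: quot_simps)
  qed
qed

section \<open>The congruence spectrum\<close>

lemma topspace_spec_top: "topspace (spec_top S) = spec_c S"
  unfolding spec_top_def topology_generated_by_topspace by (auto simp: D_open_def)

lemma openin_spec_top_D_open:
  "a \<in> S_carrier S \<Longrightarrow> b \<in> S_carrier S \<Longrightarrow> openin (spec_top S) (D_open S a b)"
  unfolding spec_top_def by (rule topology_generated_by_Basis) blast

lemma spec_c_subset: "E \<in> spec_c S \<Longrightarrow> E \<subseteq> S_carrier S \<times> S_carrier S"
  by (auto simp: spec_c_def is_prime_congruence_def is_congruence_def equiv_def refl_on_def)

lemma spec_c_refl: "E \<in> spec_c S \<Longrightarrow> x \<in> S_carrier S \<Longrightarrow> (x, x) \<in> E"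
  by (auto simp: spec_c_def is_prime_congruence_def is_congruence_def equiv_def refl_on_def)

lemma continuous_map_spec_topI:
  assumes spec: "\<And>E. E \<in> spec_c S \<Longrightarrow> f E \<in> spec_c T"
    and pullback: "\<And>a b. a \<in> S_carrier T \<Longrightarrow> b \<in> S_carrier T \<Longrightarrow>
      \<exists>a'\<in>S_carrier S. \<exists>b'\<in>S_carrier S. \<forall>E\<in>spec_c S. (a, b) \<in> f E \<longleftrightarrow> (a', b') \<in> E"
  shows "continuous_map (spec_top S) (spec_top T) f"
  unfolding spec_top_def[of T]
proof (rule continuous_on_generated_topo)
  fix U assume "U \<in> insert (spec_c T) {D_open T a b | a b. a \<in> S_carrier T \<and> b \<in> S_carrier T}"
  then consider "U = spec_c T" | a b where "a \<in> S_carrier T" "b \<in> S_carrier T" "U = D_open T a b"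
    by blast
  thus "openin (spec_top S) (f -` U \<inter> topspace (spec_top S))"
  proof cases
    case 1
    hence "f -` U \<inter> topspace (spec_top S) = topspace (spec_top S)"
      using spec by (auto simp: topspace_spec_top)
    thus ?thesis by simp
  next
    case 2
    then obtain a' b' where ab': "a' \<in> S_carrier S" "b' \<in> S_carrier S"
      and iff: "\<forall>E\<in>spec_c S. (a, b) \<in> f E \<longleftrightarrow> (a', b') \<in> E"
      using pullback by blast
    have "f -` U \<inter> topspace (spec_top S) = D_open S a' b'"
      using 2 spec iff by (auto simp: topspace_spec_top D_open_def)
    thus ?thesis using openin_spec_top_D_open[OF ab'] by simp
  qed
qed (use spec in \<open>auto simp: topspace_spec_top\<close>)

lemma homeomorphic_map_spec_quot:
  fixes A :: "'a sesquiad"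
  assumes A: "is_sesquiad A" and N: "is_congruence A N" and N_Nil: "N \<subseteq> Nil_cong A"
  shows "homeomorphic_map (spec_top (quot A N)) (spec_top A) (spec_map A (cls N))"
proof -
  let ?M = "S_carrier A" and ?f = "spec_map A (cls N)" and ?g = "lift_cong A N"
  have eqN: "equiv ?M N" using N by (simp add: is_congruence_def)
  have N_sub: "\<And>C. C \<in> spec_c A \<Longrightarrow> N \<subseteq> C" using N_Nil by (auto simp: Nil_cong_def)
  have f: "\<And>E. E \<in> spec_c (quot A N) \<Longrightarrow> ?f E \<in> spec_c A"
    using prime_congruence_spec_map_cls[OF sesquiad_comm_monoid_zero[OF A] sesquiad_sum_fin_comb[OF A] N]
    by (simp add: spec_c_def)
  have g: "\<And>C. C \<in> spec_c A \<Longrightarrow> ?g C \<in> spec_c (quot A N)"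
    using prime_congruence_lift_cong[OF A N] N_sub by (simp add: spec_c_def)
  have fg: "\<And>C. C \<in> spec_c A \<Longrightarrow> ?f (?g C) = C"
    using spec_map_lift_cong[OF eqN] N_sub
    by (simp add: spec_c_def is_prime_congruence_def is_congruence_def)
  have gf: "?g (?f E) = E" if "E \<in> spec_c (quot A N)" for E
    using spec_c_subset[OF that] by (intro lift_cong_spec_map[OF eqN]) (simp add: quot_simps)
  have "continuous_map (spec_top (quot A N)) (spec_top A) ?f"
  proof (rule continuous_map_spec_topI[OF f])
    fix a b assume "a \<in> ?M" "b \<in> ?M"
    thus "\<exists>X\<in>S_carrier (quot A N). \<exists>Y\<in>S_carrier (quot A N). \<forall>E\<in>spec_c (quot A N).
        (a, b) \<in> ?f E \<longleftrightarrow> (X, Y) \<in> E"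
      by (intro bexI[of _ "cls N a"] bexI[of _ "cls N b"]) (simp_all add: spec_map_def quot_simps cls_in_quotient)
  qed
  moreover have "continuous_map (spec_top A) (spec_top (quot A N)) ?g"
  proof (rule continuous_map_spec_topI[OF g])
    fix X Y assume "X \<in> S_carrier (quot A N)" "Y \<in> S_carrier (quot A N)"
    thus "\<exists>a\<in>?M. \<exists>b\<in>?M. \<forall>C\<in>spec_c A. (X, Y) \<in> ?g C \<longleftrightarrow> (a, b) \<in> C"
      using some_in_quotient(1)[OF eqN]
      by (intro bexI[of _ "SOME x. x \<in> X"] bexI[of _ "SOME y. y \<in> Y"]) (simp_all add: lift_cong_def quot_simps)
  qed
  ultimately have "homeomorphic_maps (spec_top (quot A N)) (spec_top A) ?f ?g"
    unfolding homeomorphic_maps_def using fg gf by (simp add: topspace_spec_top)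
  thus ?thesis unfolding homeomorphic_map_maps by blast
qed

lemma reduced_quot_Nil_cong:
  fixes A :: "'a sesquiad"
  assumes A: "is_sesquiad A"
  shows "reduced (quot A (Nil_cong A))"
  unfolding reduced_def
proof (rule Set.set_eqI)
  let ?N = "Nil_cong A" and ?M = "S_carrier A"
  have N: "is_congruence A ?N" by (rule is_congruence_Nil_cong[OF A])
  have eqN: "equiv ?M ?N" using N by (simp add: is_congruence_def)
  fix p :: "'a set \<times> 'a set"
  obtain X Y where p: "p = (X, Y)" by (cases p)
  show "p \<in> Nil_cong (quot A ?N) \<longleftrightarrow> p \<in> Id_on (S_carrier (quot A ?N))"
  proof
    assume "p \<in> Nil_cong (quot A ?N)"
    hence XY: "X \<in> ?M // ?N" "Y \<in> ?M // ?N" and all: "\<And>E. E \<in> spec_c (quot A ?N) \<Longrightarrow> (X, Y) \<in> E"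
      unfolding p Nil_cong_def quot_simps by auto
    obtain a b where ab: "a \<in> ?M" "X = cls ?N a" "b \<in> ?M" "Y = cls ?N b"
      using XY by (metis quotient_obtain_cls)
    have "(a, b) \<in> C" if C: "C \<in> spec_c A" for C
    proof -
      have "N_sub": "?N \<subseteq> C" using C by (auto simp: Nil_cong_def)
      have "lift_cong A ?N C \<in> spec_c (quot A ?N)"
        using prime_congruence_lift_cong[OF A N _ N_sub] C by (simp add: spec_c_def)
      hence "(cls ?N a, cls ?N b) \<in> lift_cong A ?N C" using all ab by simp
      moreover have "equiv ?M C" using C by (simp add: spec_c_def is_prime_congruence_def is_congruence_def)
      ultimately show ?thesis using cls_in_lift_cong_iff[OF eqN _ N_sub ab(1,3)] by blast
    qed
    hence "(a, b) \<in> ?N" using ab by (simp add: Nil_cong_def)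
    hence "X = Y" using ab eqN by (simp add: cls_eq_iff)
    thus "p \<in> Id_on (S_carrier (quot A ?N))" using XY p by (simp add: Id_on_def quot_simps)
  next
    assume "p \<in> Id_on (S_carrier (quot A ?N))"
    thus "p \<in> Nil_cong (quot A ?N)" using p spec_c_refl by (auto simp: Nil_cong_def)
  qed
qed

lemma Nil_cong_subset_of_reduced:
  fixes A :: "'a sesquiad"
  assumes A: "is_sesquiad A" and C: "is_congruence A C" and red: "reduced (quot A C)"
  shows "Nil_cong A \<subseteq> C"
proof (clarify)
  fix a b assume ab: "(a, b) \<in> Nil_cong A"
  have eqC: "equiv (S_carrier A) C" using C by (simp add: is_congruence_def)
  have a: "a \<in> S_carrier A" "b \<in> S_carrier A" using ab by (auto simp: Nil_cong_def)
  have "(cls C a, cls C b) \<in> E" if E: "E \<in> spec_c (quot A C)" for E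
  proof -
    have "spec_map A (cls C) E \<in> spec_c A"
      using prime_congruence_spec_map_cls[OF sesquiad_comm_monoid_zero[OF A] sesquiad_sum_fin_comb[OF A] C] E
      by (simp add: spec_c_def)
    hence "(a, b) \<in> spec_map A (cls C) E" using ab by (auto simp: Nil_cong_def)
    thus ?thesis by (simp add: spec_map_def)
  qed
  hence "(cls C a, cls C b) \<in> Nil_cong (quot A C)"
    using a by (auto simp: Nil_cong_def quot_simps cls_in_quotient)
  hence "cls C a = cls C b" using red by (simp add: reduced_def Id_on_def)
  thus "(a, b) \<in> C" using a eqC by (simp add: cls_eq_iff)
qed

theorem lemma2p2p4:
  fixes A :: "'a sesquiad"
  assumes "is_sesquiad A"
  shows "is_congruence A (Nil_cong A)
    \<and> reduced (red A)
    \<and> (\<forall>C. is_congruence A C \<and> reduced (quot A C) \<longrightarrow> Nil_cong A \<subseteq> C)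
    \<and> homeomorphic_map (spec_top (red A)) (spec_top A) (spec_map A (cls (Nil_cong A)))"
  unfolding red_def
  using is_congruence_Nil_cong[OF assms] reduced_quot_Nil_cong[OF assms]
    Nil_cong_subset_of_reduced[OF assms]
    homeomorphic_map_spec_quot[OF assms is_congruence_Nil_cong[OF assms] subset_refl]
  by blast

end
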